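(* The set of binary representations (without leading zeros) of the record-setters of the Stern sequence $a$ is a context-free language over the alphabet $\{0,1\}$.
   Context: Stern's sequence $(a(n))_{n\ge0}$: $a(0)=0$, $a(1)=1$, $a(2n)=a(n)$, $a(2n+1)=a(n)+a(n+1)$. A record-setter of $a$ is an index $v\ge1$ with $a(i)<a(v)$ for all $i<v$. *)

theory Defs
  imports Main
begin

function stern :: "nat \<Rightarrow> nat" where
  "stern n = (if n < 2 then n
              else if even n then stern (n div 2)
              else stern (n div 2) + stern (n div 2 + 1))"
  by auto
termination by (relation "measure id") (auto elim!: oddE)

declare stern.simps [simp del]

lemma stern_0: "stern 0 = 0" by (simp add: stern.simps)
lemma stern_1: "stern 1 = 1" by (simp add: stern.simps)
lemma stern_even: "stern (2 * n) = stern n"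
  by (cases "n = 0") (simp_all add: stern.simps)
lemma stern_odd: "stern (2 * n + 1) = stern n + stern (n + 1)"
  by (cases "n = 0") (simp_all add: stern.simps stern_0 stern_1)

definition record_setter :: "nat \<Rightarrow> bool" where
  "record_setter v \<longleftrightarrow> v \<ge> 1 \<and> (\<forall>i<v. stern i < stern v)"

text \<open>Most significant bit first; False = 0, True = 1; no leading zeros
  (bin_rep 0 = [], and for n \<ge> 1 the first bit is True).\<close>
fun bin_rep :: "nat \<Rightarrow> bool list" where
  "bin_rep n = (if n = 0 then [] else bin_rep (n div 2) @ [odd n])"

declare bin_rep.simps [simp del]

text \<open>A production is a pair of a nonterminal and a right-hand side, a word over
  nonterminals (Inl) and terminals (Inr).\<close>
type_synonym ('n, 't) prod = "'n \<times> ('n + 't) list"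

definition cfg_step :: "('n, 't) prod set \<Rightarrow> ('n + 't) list \<Rightarrow> ('n + 't) list \<Rightarrow> bool" where
  "cfg_step P u v \<longleftrightarrow>
     (\<exists>l A r \<alpha>. u = l @ [Inl A] @ r \<and> (A, \<alpha>) \<in> P \<and> v = l @ \<alpha> @ r)"

definition cfg_lang :: "('n, 't) prod set \<Rightarrow> 'n \<Rightarrow> 't list set" where
  "cfg_lang P S = {w. (cfg_step P)\<^sup>*\<^sup>* [Inl S] (map Inr w)}"

text \<open>A language is context-free if it is generated by some grammar with finitely
  many productions; nonterminals are drawn from nat (any finite nonterminal
  alphabet can be encoded injectively into nat).\<close>
definition context_free :: "'t list set \<Rightarrow> bool" where
  "context_free L \<longleftrightarrow>
     (\<exists>(P :: (nat, 't) prod set) S. finite P \<and> cfg_lang P S = L)"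

end

theory Submission
  imports Defs "HOL-Number_Theory.Fib"
begin

text \<open>Reading the binary representation of n from its most significant bit, the pair
  (a(n), a(n+1)) starts at (0, 1) and evolves by (x, y) \<mapsto> (x + y, y) on a 1 and by
  (x, y) \<mapsto> (x, x + y) on a 0. The largest first component reachable from (x, y) with
  m further bits is F(m) min(x, y) + F(m+1) max(x, y), attained by alternating bits. A number
  v is therefore a record-setter iff for every 1-bit of v, replacing it by 0 and continuing
  optimally stays below a(v); measuring every bit choice by how much it lowers the reachable
  maximum turns this into explicit inequalities between Fibonacci and Lucas numbers.
  Solving them shows that the binary representations of the record-setters are exactly
  the words of seven families built from blocks (10)^k, such as (10)^a 0 (10)^b 1 with
  1 \<le> a \<le> b + 1, and these families are generated by a grammar with three nonterminals.\<close>

section \<open>Fibonacci and Lucas numbers\<close>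

lemma fib_ge_1: "n \<ge> 1 \<Longrightarrow> fib n \<ge> 1"
  using fib_neq_0_nat[of n] by simp

lemma fib_less_fib_Suc: "2 \<le> m \<Longrightarrow> fib m < fib (Suc m)"
proof -
  assume "2 \<le> m"
  then obtain j where "m = Suc j" "j \<ge> 1" by (cases m) auto
  thus ?thesis using fib_ge_1[of j] by simp
qed

lemma fib_less_fib: "m + 2 \<le> n \<Longrightarrow> fib m < fib n"
proof -
  assume "m + 2 \<le> n"
  have "fib m < fib (m + 2)" using fib_ge_1[of "Suc m"] by (simp add: numeral_2_eq_2)
  also have "\<dots> \<le> fib n" using \<open>m + 2 \<le> n\<close> by (rule fib_mono)
  finally show ?thesis .
qed

lemma fib_ge_3: "n \<ge> 4 \<Longrightarrow> fib n \<ge> 3"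
proof -
  assume "n \<ge> 4"
  hence "fib 4 \<le> fib n" by (rule fib_mono)
  thus ?thesis by (simp add: eval_nat_numeral)
qed

lemma fib_diff_rec: "n \<ge> 2 \<Longrightarrow> fib n = fib (n - 1) + fib (n - 2)"
  by (cases n rule: fib.cases) auto

lemma fib_minus_1_expand: "n \<ge> 5 \<Longrightarrow>
    fib (n - 1) = fib (n - 3) + 2 * fib (n - 4) + fib (n - 5)"
proof -
  assume "n \<ge> 5"
  then obtain k where k: "n = k + 5" using le_Suc_ex by (metis add.commute)
  show ?thesis using k by (simp add: eval_nat_numeral)
qed

lemma three_fib_le_two_fib_Suc: "k \<noteq> 1 \<Longrightarrow> 3 * fib k \<le> 2 * fib (Suc k)"
proof (cases k)
  case 0 thus ?thesis by simp
next
  case (Suc j)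
  assume "k \<noteq> 1"
  with Suc obtain i where j: "j = Suc i" by (cases j) auto
  have "fib (Suc i) \<ge> fib i" by (rule fib_Suc_mono)
  thus ?thesis using Suc j by simp
qed

lemma fib_shift_expand:
  "fib (n + 2) = fib n + fib (Suc n)" "fib (n + 3) = fib n + 2 * fib (Suc n)"
  "fib (n + 4) = 2 * fib n + 3 * fib (Suc n)" "fib (n + 5) = 3 * fib n + 5 * fib (Suc n)"
  by (simp_all add: eval_nat_numeral)

lemma fib_mult_le: "p \<ge> 1 \<Longrightarrow> q \<ge> 1 \<Longrightarrow>
    fib p * fib q \<le> fib (p + q - 1)"
proof -
  assume "p \<ge> 1" "q \<ge> 1"
  then obtain p' q' where p: "p = Suc p'" and q: "q = Suc q'" by (cases p, simp, cases q, auto)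
  have "fib (Suc (p' + q')) = fib (Suc q') * fib (Suc p') + fib q' * fib p'" by (rule fib_add)
  thus ?thesis using p q by (simp add: algebra_simps)
qed

lemma fib_mult_ge: "p \<ge> 1 \<Longrightarrow> q \<ge> 1 \<Longrightarrow>
    fib (p + q - 2) \<le> fib p * fib q"
proof -
  assume a: "p \<ge> 1" "q \<ge> 1"
  then obtain p' where p: "p = Suc p'" by (cases p) auto
  show ?thesis
  proof (cases "q = 1")
    case True thus ?thesis using p fib_Suc_mono[of p'] by simp
  next
    case False
    then obtain q' where q: "q = Suc (Suc q')" using a by (cases q; cases "q - 1") auto
    have "fib (Suc (p' + q')) = fib (Suc q') * fib (Suc p') + fib q' * fib p'" by (rule fib_add)
    moreover have "fib q' * fib p' \<le> fib q' * fib (Suc p')" using fib_Suc_mono by simp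
    ultimately show ?thesis using p q by (simp add: algebra_simps)
  qed
qed

lemma fib_mult_ge_bound: "q \<ge> 1 \<Longrightarrow> m \<ge> 1 \<Longrightarrow> fib q \<le> u \<Longrightarrow>
    fib (m + q - 2) \<le> fib m * u"
proof -
  assume a: "q \<ge> 1" "m \<ge> 1" "fib q \<le> u"
  have "fib (m + q - 2) \<le> fib m * fib q" using a by (intro fib_mult_ge) auto
  also have "\<dots> \<le> fib m * u" using a by simp
  finally show ?thesis .
qed

lemma fib_vajda_int: "q \<le> p \<Longrightarrow>
    int (fib (q+k)) * int (fib p) - int (fib q) * int (fib (p+k)) = (-1)^q * int (fib k) * int (fib (p-q))"
proof (induction q arbitrary: p rule: fib.induct)
  case 1 thus ?case by simp
next
  case 2
  then obtain p' where p: "p = Suc p'" by (cases p) auto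
  thus ?case using fib_add[of p' k] by (simp add: algebra_simps)
next
  case (3 j)
  have p: "Suc (Suc j) \<le> p" by fact
  have ih1: "int (fib (Suc j+k)) * int (fib p) - int (fib (Suc j)) * int (fib (p+k)) = (-1)^(Suc j) * int (fib k) * int (fib (p - Suc j))"
    using 3 p by simp
  have ih0: "int (fib (j+k)) * int (fib p) - int (fib j) * int (fib (p+k)) = (-1)^j * int (fib k) * int (fib (p - j))"
    using 3 p by simp
  have f1: "fib (Suc (Suc j) + k) = fib (Suc j + k) + fib (j + k)" by simp
  have f2: "fib (p - j) = fib (p - Suc j) + fib (p - Suc (Suc j))"
  proof -
    have "p - j = Suc (Suc (p - Suc (Suc j)))" using p by arith
    moreover have "p - Suc j = Suc (p - Suc (Suc j))" using p by arith
    ultimately show ?thesis by simp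
  qed
  show ?case using ih1 ih0 f1 f2 by (simp add: algebra_simps)
qed

lemma fib_vajda_even: "q \<le> p \<Longrightarrow> even q \<Longrightarrow>
    fib (q+k) * fib p = fib q * fib (p+k) + fib k * fib (p-q)"
  using fib_vajda_int[of q p k] by (simp add: of_nat_mult[symmetric] del: of_nat_mult)

lemma fib_vajda_odd: "q \<le> p \<Longrightarrow> odd q \<Longrightarrow>
    fib q * fib (p+k) = fib (q+k) * fib p + fib k * fib (p-q)"
  using fib_vajda_int[of q p k] by (simp add: of_nat_mult[symmetric] del: of_nat_mult)

fun lucas :: "nat \<Rightarrow> nat" where
  "lucas 0 = 2" | "lucas (Suc 0) = 1" | "lucas (Suc (Suc n)) = lucas (Suc n) + lucas n"

lemma lucas_fib: "lucas (Suc n) = fib n + fib (Suc (Suc n))"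
  by (induction n rule: fib.induct) auto

lemma lucas_ge_1: "lucas n \<ge> 1"
  by (induction n rule: lucas.induct) auto

lemma lucas_plus_2: "lucas (n + 2) = lucas (n + 1) + lucas n"
  by (simp add: eval_nat_numeral)

lemma fib_mult_lucas_ge: "q \<le> p \<Longrightarrow>
    int (fib p) * int (lucas q) = int (fib (p+q)) + (-1)^q * int (fib (p-q))"
proof (induction q arbitrary: p rule: lucas.induct)
  case 1 thus ?case by simp
next
  case 2
  then obtain p' where p: "p = Suc p'" by (cases p) auto
  thus ?case by simp
next
  case (3 j)
  have p: "Suc (Suc j) \<le> p" by fact
  have ih1: "int (fib p) * int (lucas (Suc j)) = int (fib (p + Suc j)) + (-1)^(Suc j) * int (fib (p - Suc j))"
    using 3 p by simp
  have ih0: "int (fib p) * int (lucas j) = int (fib (p + j)) + (-1)^j * int (fib (p - j))"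
    using 3 p by simp
  have f1: "fib (p + Suc (Suc j)) = fib (p + Suc j) + fib (p + j)" by simp
  have f2: "fib (p - j) = fib (p - Suc j) + fib (p - Suc (Suc j))"
  proof -
    have "p - j = Suc (Suc (p - Suc (Suc j)))" using p by arith
    moreover have "p - Suc j = Suc (p - Suc (Suc j))" using p by arith
    ultimately show ?thesis by simp
  qed
  show ?case using ih1 ih0 f1 f2 by (simp add: algebra_simps)
qed

lemma fib_mult_lucas_le: "p \<le> q \<Longrightarrow>
    int (fib p) * int (lucas q) = int (fib (p+q)) - (-1)^p * int (fib (q-p))"
proof (induction p arbitrary: q rule: fib.induct)
  case 1 thus ?case by simp
next
  case 2
  then obtain q' where q: "q = Suc q'" by (cases q) auto
  thus ?case using lucas_fib[of q'] by simp
next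
  case (3 j)
  have q: "Suc (Suc j) \<le> q" by fact
  have ih1: "int (fib (Suc j)) * int (lucas q) = int (fib (Suc j + q)) - (-1)^(Suc j) * int (fib (q - Suc j))"
    using 3 q by simp
  have ih0: "int (fib j) * int (lucas q) = int (fib (j + q)) - (-1)^j * int (fib (q - j))"
    using 3 q by simp
  have f1: "fib (Suc (Suc j) + q) = fib (Suc j + q) + fib (j + q)" by simp
  have f2: "fib (q - j) = fib (q - Suc j) + fib (q - Suc (Suc j))"
  proof -
    have "q - j = Suc (Suc (q - Suc (Suc j)))" using q by arith
    moreover have "q - Suc j = Suc (q - Suc (Suc j))" using q by arith
    ultimately show ?thesis by simp
  qed
  show ?case using ih1 ih0 f1 f2 by (simp add: algebra_simps)
qed

definition bits_to_nat :: "bool list \<Rightarrow> nat" where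
  "bits_to_nat w = foldl (\<lambda>a b. 2*a + (if b then 1 else 0)) 0 w"

lemma bits_to_nat_snoc[simp]: "bits_to_nat (w@[b]) = 2 * bits_to_nat w + (if b then 1 else 0)"
  by (simp add: bits_to_nat_def)

lemma bits_to_nat_Nil[simp]: "bits_to_nat [] = 0" by (simp add: bits_to_nat_def)

lemma bits_to_nat_append: "bits_to_nat (p@q) = bits_to_nat p * 2^length q + bits_to_nat q"
proof (induction q rule: rev_induct)
  case Nil thus ?case by simp
next
  case (snoc x xs)
  have "bits_to_nat (p @ xs @ [x]) = bits_to_nat ((p @ xs) @ [x])" by simp
  also have "\<dots> = 2 * bits_to_nat (p@xs) + (if x then 1 else 0)" by (rule bits_to_nat_snoc)
  finally show ?case using snoc by (simp add: algebra_simps)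
qed

lemma bits_to_nat_single: "bits_to_nat [b] = (if b then 1 else 0)" by (simp add: bits_to_nat_def)

lemma bits_to_nat_Cons: "bits_to_nat (b#w) = (if b then 2^length w else 0) + bits_to_nat w"
  using bits_to_nat_append[of "[b]" w] by (simp add: bits_to_nat_single)

lemma bits_to_nat_less: "bits_to_nat w < 2^length w"
  by (induction w rule: rev_induct) auto

lemma bits_to_nat_Cons_True_ge_1: "bits_to_nat (True # s) \<ge> 1"
proof -
  have "(1::nat) \<le> 2 ^ length s" by simp
  hence "(1::nat) \<le> 2 ^ length s + bits_to_nat s" by linarith
  thus ?thesis by (simp add: bits_to_nat_Cons)
qed

lemma bin_rep_bits_to_nat: "bin_rep (bits_to_nat (True#w)) = True#w"
proof (induction w rule: rev_induct)
  case Nil thus ?case by (simp add: bits_to_nat_def bin_rep.simps)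
next
  case (snoc b w)
  have "bits_to_nat (True # w @ [b]) = 2 * bits_to_nat (True#w) + (if b then 1 else 0)"
    using bits_to_nat_snoc[of "True#w" b] by simp
  moreover have "bits_to_nat (True#w) > 0" by (simp add: bits_to_nat_Cons)
  ultimately show ?case using snoc
    by (subst bin_rep.simps) auto
qed

lemma bits_to_nat_bin_rep: "bits_to_nat (bin_rep v) = v"
proof (induction v rule: bin_rep.induct)
  case (1 n) thus ?case by (subst bin_rep.simps) auto
qed

lemma bin_rep_Cons_True: "v \<ge> 1 \<Longrightarrow> \<exists>w. bin_rep v = True # w"
proof (induction v rule: bin_rep.induct)
  case (1 n)
  show ?case
  proof (cases "n = 1")
    case True thus ?thesis by (simp add: bin_rep.simps)
  next
    case False
    with 1 have "n div 2 \<ge> 1" by auto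
    with 1 obtain w where "bin_rep (n div 2) = True # w" using False by auto
    thus ?thesis using 1 by (subst bin_rep.simps) auto
  qed
qed

lemma bits_to_nat_length_surj: "i < 2^n \<Longrightarrow> \<exists>w. length w = n \<and> bits_to_nat w = i"
proof (induction n arbitrary: i)
  case 0 thus ?case by auto
next
  case (Suc n)
  have "i div 2 < 2^n" using Suc.prems by auto
  then obtain w where "length w = n" "bits_to_nat w = i div 2" using Suc.IH by blast
  thus ?case by (intro exI[of _ "w @ [odd i]"]) auto
qed

lemma bits_to_nat_less_split:
  "length w' = length w \<Longrightarrow> bits_to_nat w' < bits_to_nat w \<Longrightarrow>
   \<exists>q r t. w = q @ True # r \<and> w' = q @ False # t \<and> length r = length t"
proof (induction w arbitrary: w')
  case Nil thus ?case by simp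
next
  case (Cons b w)
  then obtain b' u where w': "w' = b' # u" and lu: "length u = length w" by (cases w') auto
  show ?case
  proof (cases "b = b'")
    case True
    with Cons w' have "bits_to_nat u < bits_to_nat w" by (auto simp: bits_to_nat_Cons)
    with Cons.IH lu obtain q r t where "w = q @ True # r" "u = q @ False # t" "length r = length t" by blast
    thus ?thesis using True w' by (intro exI[of _ "b#q"] exI[of _ r] exI[of _ t]) auto
  next
    case False
    have "bits_to_nat u < 2^length w" using bits_to_nat_less[of u] lu by simp
    moreover have "bits_to_nat w < 2^length w" using bits_to_nat_less[of w] by simp
    ultimately have bb: "b = True \<and> b' = False" using False Cons w' lu
      by (auto simp: bits_to_nat_Cons split: if_splits)
    show ?thesis using w' lu bb
      by (intro exI[of _ "[]"] exI[of _ w] exI[of _ u]) auto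
  qed
qed

lemma bits_to_nat_less_at_bit: "length r = length t \<Longrightarrow>
    bits_to_nat (q @ False # t) < bits_to_nat (q @ True # r)"
proof -
  assume "length r = length t"
  moreover have "bits_to_nat t < 2^length t" by (rule bits_to_nat_less)
  ultimately show ?thesis by (auto simp: bits_to_nat_append bits_to_nat_Cons)
qed

section \<open>Stern's sequence along the binary digits\<close>

definition stern_step :: "bool \<Rightarrow> nat \<times> nat \<Rightarrow> nat \<times> nat" where
  "stern_step b st = (if b then (fst st + snd st, snd st) else (fst st, fst st + snd st))"

definition stern_run :: "bool list \<Rightarrow> nat \<times> nat \<Rightarrow> nat \<times> nat" where
  "stern_run w st = foldl (\<lambda>s b. stern_step b s) st w"

lemma stern_run_Nil[simp]: "stern_run [] st = st" by (simp add: stern_run_def)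

lemma stern_run_Cons[simp]: "stern_run (b#w) st = stern_run w (stern_step b st)" by (simp add: stern_run_def)

lemma stern_run_append[simp]: "stern_run (p@q) st = stern_run q (stern_run p st)" by (simp add: stern_run_def)

lemma stern_run_pair: "stern (bits_to_nat w) = fst (stern_run w (0,1)) \<and> stern (Suc (bits_to_nat w)) = snd (stern_run w (0,1))"
proof (induction w rule: rev_induct)
  case Nil thus ?case using stern_0 stern_1 by simp
next
  case (snoc b w)
  then show ?case
    using stern_even[of "bits_to_nat w"] stern_odd[of "bits_to_nat w"] stern_even[of "Suc (bits_to_nat w)"]
    by (auto simp: stern_step_def)
qed

lemma stern_bits_to_nat: "stern (bits_to_nat w) = fst (stern_run w (0,1))" using stern_run_pair by blast

definition max_run :: "nat \<Rightarrow> nat \<times> nat \<Rightarrow> nat" where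
  "max_run m st = (if m = 0 then fst st else fib m * min (fst st) (snd st) + fib (Suc m) * max (fst st) (snd st))"

lemma max_run_0[simp]: "max_run 0 st = fst st" by (simp add: max_run_def)

lemma max_run_Suc: "max_run (Suc m) st = max (max_run m (stern_step False st)) (max_run m (stern_step True st))"
proof (cases st)
  case (Pair x y)
  show ?thesis
  proof (cases m)
    case 0 thus ?thesis using Pair by (simp add: max_run_def stern_step_def)
  next
    case (Suc k)
    have "max_run (Suc m) (x,y) = fib (Suc m) * (min x y + max x y) + fib m * max x y"
      using Suc by (simp add: max_run_def algebra_simps)
    moreover have "max_run m (stern_step False (x,y)) = fib m * x + fib (Suc m) * (x+y)"
      using Suc by (simp add: max_run_def stern_step_def)
    moreover have "max_run m (stern_step True (x,y)) = fib m * y + fib (Suc m) * (x+y)"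
      using Suc by (simp add: max_run_def stern_step_def)
    moreover have "min x y + max x y = x + y" by simp
    ultimately show ?thesis using Pair by (simp add: max_def)
  qed
qed

lemma stern_run_le_max_run: "fst (stern_run t st) \<le> max_run (length t) st"
proof (induction t arbitrary: st)
  case Nil thus ?case by simp
next
  case (Cons b t)
  have "fst (stern_run t (stern_step b st)) \<le> max_run (length t) (stern_step b st)" by (rule Cons.IH)
  also have "\<dots> \<le> max_run (Suc (length t)) st" by (cases b) (auto simp: max_run_Suc)
  finally show ?case by simp
qed

lemma max_run_attained: "\<exists>t. length t = m \<and> fst (stern_run t st) = max_run m st"
proof (induction m arbitrary: st)
  case 0 thus ?case by simp
next
  case (Suc m)
  show ?case
  proof (cases "max_run m (stern_step False st) \<le> max_run m (stern_step True st)")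
    case True
    obtain t where "length t = m" "fst (stern_run t (stern_step True st)) = max_run m (stern_step True st)"
      using Suc by blast
    thus ?thesis using True by (intro exI[of _ "True#t"]) (auto simp: max_run_Suc)
  next
    case False
    obtain t where "length t = m" "fst (stern_run t (stern_step False st)) = max_run m (stern_step False st)"
      using Suc by blast
    thus ?thesis using False by (intro exI[of _ "False#t"]) (auto simp: max_run_Suc)
  qed
qed

lemma record_setter_iff_max_run:
  assumes v: "v \<ge> 1"
  shows "record_setter v \<longleftrightarrow>
    (\<forall>q r. bin_rep v = q @ True # r \<longrightarrow> max_run (length r) (stern_run (q @ [False]) (0,1)) < stern v)"
proof -
  define w where "w = bin_rep v"
  have nw: "bits_to_nat w = v" by (simp add: w_def bits_to_nat_bin_rep)
  have sv: "stern v = fst (stern_run w (0,1))" using stern_bits_to_nat[of w] nw by simp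
  show ?thesis
  proof
    assume rs: "record_setter v"
    show "\<forall>q r. bin_rep v = q @ True # r \<longrightarrow> max_run (length r) (stern_run (q @ [False]) (0,1)) < stern v"
    proof (intro allI impI)
      fix q r assume qr: "bin_rep v = q @ True # r"
      obtain t where t: "length t = length r" "fst (stern_run t (stern_run (q@[False]) (0,1))) = max_run (length r) (stern_run (q @ [False]) (0,1))"
        using max_run_attained by blast
      have "bits_to_nat (q @ False # t) < bits_to_nat (q @ True # r)" using bits_to_nat_less_at_bit t(1)
        by simp
      hence lt: "bits_to_nat (q @ False # t) < v" using qr nw w_def by simp
      have "stern (bits_to_nat (q @ False # t)) = max_run (length r) (stern_run (q @ [False]) (0,1))"
        using stern_bits_to_nat[of "q @ False # t"] t(2) by simp
      thus "max_run (length r) (stern_run (q @ [False]) (0,1)) < stern v"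
        using rs lt unfolding record_setter_def by auto
    qed
  next
    assume max_run: "\<forall>q r. bin_rep v = q @ True # r \<longrightarrow> max_run (length r) (stern_run (q @ [False]) (0,1)) < stern v"
    show "record_setter v" unfolding record_setter_def
    proof (intro conjI allI impI)
      show "1 \<le> v" by (rule v)
      fix i assume iv: "i < v"
      have "i < 2^length w" using iv nw bits_to_nat_less[of w] by simp
      then obtain w' where w': "length w' = length w" "bits_to_nat w' = i" using bits_to_nat_length_surj
        by blast
      then obtain q r t where qrt: "w = q @ True # r" "w' = q @ False # t" "length r = length t"
        using bits_to_nat_less_split[of w' w] iv nw by auto
      have "stern i = fst (stern_run t (stern_run (q@[False]) (0,1)))" using stern_bits_to_nat[of w'] w' qrt
        by simp
      also have "\<dots> \<le> max_run (length r) (stern_run (q@[False]) (0,1))"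
        using stern_run_le_max_run qrt(3) by metis
      also have "\<dots> < stern v" using max_run qrt(1) unfolding w_def by blast
      finally show "stern i < stern v" .
    qed
  qed
qed

section \<open>Losses and record words\<close>

definition loss :: "bool \<Rightarrow> nat \<times> nat \<Rightarrow> nat \<Rightarrow> nat" where
  "loss b st M = max_run M st - max_run (M - 1) (stern_step b st)"

lemma max_run_Suc_loss: "max_run (Suc m) st = max_run m (stern_step b st) + loss b st (Suc m)"
  unfolding loss_def by (cases b) (auto simp: max_run_Suc)

lemma loss_False_Suc_Suc: "loss False (x,y) (Suc (Suc k)) = fib (Suc k) * (y - x)"
proof -
  have "max_run (Suc (Suc k)) (x,y) = max_run (Suc k) (x, x+y) + fib (Suc k) * (y - x)"
  proof (cases "x \<le> y")
    case True
    then obtain d where d: "y = x + d" using le_Suc_ex by blast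
    show ?thesis using True by (simp add: max_run_def d min_def max_def algebra_simps)
  next
    case False
    thus ?thesis by (simp add: max_run_def min_def max_def algebra_simps)
  qed
  thus ?thesis unfolding loss_def by (simp add: stern_step_def)
qed

lemma loss_True_Suc_Suc: "loss True (x,y) (Suc (Suc k)) = fib (Suc k) * (x - y)"
proof -
  have "max_run (Suc (Suc k)) (x,y) = max_run (Suc k) (x+y, y) + fib (Suc k) * (x - y)"
  proof (cases "y \<le> x")
    case True
    then obtain d where d: "x = y + d" using le_Suc_ex by blast
    show ?thesis using True by (simp add: max_run_def d min_def max_def algebra_simps)
  next
    case False
    thus ?thesis by (simp add: max_run_def min_def max_def algebra_simps)
  qed
  thus ?thesis unfolding loss_def by (simp add: stern_step_def)
qed

lemma loss_False_1: "loss False (x,y) (Suc 0) = y"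
  by (simp add: loss_def max_run_def stern_step_def)

lemma loss_True_1: "loss True (x,y) (Suc 0) = 0"
  by (simp add: loss_def max_run_def stern_step_def)

lemma loss_False_ge_2: "M \<ge> 2 \<Longrightarrow> loss False st M = fib (M - 1) * (snd st - fst st)"
proof -
  assume "M \<ge> 2"
  then obtain k where "M = Suc (Suc k)" by (cases M; cases "M - 1") auto
  thus ?thesis by (cases st) (simp add: loss_False_Suc_Suc)
qed

lemma loss_False_pos: "fst st < snd st \<Longrightarrow> M \<ge> 1 \<Longrightarrow> 0 < loss False st M"
proof -
  assume a: "fst st < snd st" "M \<ge> 1"
  obtain x y where st: "st = (x,y)" by fastforce
  show ?thesis
  proof (cases M)
    case 0 thus ?thesis using a by simp
  next
    case (Suc k)
    show ?thesis
    proof (cases k)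
      case 0 thus ?thesis using Suc st a by (simp add: loss_False_1)
    next
      case (Suc j)
      thus ?thesis using \<open>M = Suc k\<close> st a fib_ge_1[of "Suc j"] by (simp add: loss_False_Suc_Suc)
    qed
  qed
qed

fun path_loss :: "bool list \<Rightarrow> nat \<times> nat \<Rightarrow> nat" where
  "path_loss [] st = 0"
| "path_loss (b#t) st = loss b st (Suc (length t)) + path_loss t (stern_step b st)"

lemma max_run_eq_path_loss: "max_run (length t) st = fst (stern_run t st) + path_loss t st"
proof (induction t arbitrary: st)
  case Nil thus ?case by simp
next
  case (Cons b t)
  show ?case using Cons.IH[of "stern_step b st"] max_run_Suc_loss[of "length t" st b] by simp
qed

text \<open>A word is a record word from state st if, at each of its 1-bits, switching
  that bit to 0 loses more than the rest of the word loses against the best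
  continuation (compare max_run_eq_path_loss and max_run_Suc_loss).\<close>

definition record_word_from :: "bool list \<Rightarrow> nat \<times> nat \<Rightarrow> bool" where
  "record_word_from w st \<longleftrightarrow> (\<forall>q r. w = q @ True # r \<longrightarrow>
      path_loss (True # r) (stern_run q st) < loss False (stern_run q st) (Suc (length r)))"

abbreviation record_word :: "bool list \<Rightarrow> bool" where
  "record_word w \<equiv> record_word_from w (0, 1)"

lemma record_setter_iff_record_word:
  assumes v: "v \<ge> 1" shows "record_setter v \<longleftrightarrow> record_word (bin_rep v)"
proof -
  have "max_run (length r) (stern_run (q @ [False]) (0, 1)) < stern v \<longleftrightarrow>
      path_loss (True # r) (stern_run q (0, 1)) < loss False (stern_run q (0, 1)) (Suc (length r))"
    if qr: "bin_rep v = q @ True # r" for q r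
  proof -
    define st where "st = stern_run q (0, 1)"
    have "stern v = fst (stern_run (True # r) st)"
      using stern_bits_to_nat[of "bin_rep v"] bits_to_nat_bin_rep[of v] qr st_def by simp
    moreover have "max_run (Suc (length r)) st = fst (stern_run (True # r) st) + path_loss (True # r) st"
      using max_run_eq_path_loss[of "True # r" st] by (simp del: path_loss.simps stern_run_Cons)
    moreover have "max_run (Suc (length r)) st
        = max_run (length r) (stern_step False st) + loss False st (Suc (length r))"
      by (rule max_run_Suc_loss)
    moreover have "max_run (length r) (stern_run (q @ [False]) (0, 1)) = max_run (length r) (stern_step False st)"
      by (simp add: st_def)
    ultimately show ?thesis unfolding st_def by linarith
  qed
  thus ?thesis using record_setter_iff_max_run[OF v] unfolding record_word_from_def by blast
qed

lemma record_setter_odd: "record_setter v \<Longrightarrow> odd v"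
proof (rule ccontr)
  assume rs: "record_setter v" and ev: "\<not> odd v"
  then obtain k where k: "v = 2 * k" by (auto elim: evenE)
  with rs have "k \<ge> 1" unfolding record_setter_def by auto
  hence "k < v" using k by simp
  hence "stern k < stern v" using rs unfolding record_setter_def by auto
  thus False using k stern_even[of k] by simp
qed

text \<open>After a 1-bit the state has fst \<ge> snd, so a following 0 gains nothing.\<close>

lemma record_word_from_no_inner_11:
  assumes "record_word_from (q @ True # True # r) st" shows "r = []"
proof (rule ccontr)
  assume "r \<noteq> []"
  then obtain k where k: "length r = Suc k" by (cases r) auto
  have "path_loss (True # r) (stern_run (q @ [True]) st) < loss False (stern_run (q @ [True]) st) (Suc (length r))"
    using assms unfolding record_word_from_def by (metis append.assoc append_Cons append_Nil)
  moreover have "loss False (stern_run (q @ [True]) st) (Suc (length r)) = 0"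
    using k by (simp add: stern_step_def loss_False_Suc_Suc split: prod.splits)
  ultimately show False by simp
qed

definition rep10 :: "nat \<Rightarrow> bool list" where
  "rep10 k = concat (replicate k [True, False])"

lemma rep10_0[simp]: "rep10 0 = []" by (simp add: rep10_def)

lemma rep10_Suc[simp]: "rep10 (Suc k) = True # False # rep10 k" by (simp add: rep10_def)

lemma rep10_add: "rep10 (a + b) = rep10 a @ rep10 b" by (simp add: rep10_def replicate_add)

lemma length_rep10[simp]: "length (rep10 k) = 2 * k" by (induction k) auto

lemma rep10_append_10: "rep10 k @ [True, False] = True # False # rep10 k"
  by (induction k) auto

lemma rep10_eq_True_iff:
  "rep10 k = q @ True # r \<longleftrightarrow> (\<exists>i<k. q = rep10 i \<and> r = False # rep10 (k - Suc i))"
proof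
  show "rep10 k = q @ True # r \<Longrightarrow>
      \<exists>i<k. q = rep10 i \<and> r = False # rep10 (k - Suc i)"
  proof (induction k arbitrary: q)
    case 0 thus ?case by simp
  next
    case (Suc k)
    show ?case
    proof (cases q)
      case Nil thus ?thesis using Suc.prems by auto
    next
      case (Cons c q1)
      with Suc.prems obtain q2 where q1: "q1 = False # q2" and "rep10 k = q2 @ True # r"
        by (cases q1) auto
      with Suc.IH obtain i where "i < k" "q2 = rep10 i" "r = False # rep10 (k - Suc i)" by blast
      thus ?thesis using Cons q1 Suc.prems by (intro exI[of _ "Suc i"]) auto
    qed
  qed
  assume "\<exists>i<k. q = rep10 i \<and> r = False # rep10 (k - Suc i)"
  then obtain i where i: "i < k" "q = rep10 i" "r = False # rep10 (k - Suc i)" by blast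
  hence "rep10 k = rep10 i @ rep10 (Suc (k - Suc i))"
    using rep10_add[of i "Suc (k - Suc i)"] by simp
  thus "rep10 k = q @ True # r" using i by simp
qed

definition step10 :: "nat \<times> nat \<Rightarrow> nat \<times> nat" where
  "step10 st = (fst st + snd st, fst st + 2 * snd st)"

fun run10 :: "nat \<Rightarrow> nat \<times> nat \<Rightarrow> nat \<times> nat" where
  "run10 0 st = st"
| "run10 (Suc k) st = run10 k (step10 st)"

lemma run10_add: "run10 (i + j) st = run10 j (run10 i st)"
  by (induction i arbitrary: st) auto

lemma stern_run_rep10: "stern_run (rep10 k) st = run10 k st"
  by (induction k arbitrary: st) (auto simp: stern_step_def step10_def mult_2 add.assoc)

lemma snd_run10: "snd (run10 k (x,y)) = fib (2*k) * x + fib (Suc (2*k)) * y"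
proof (induction k arbitrary: x y)
  case 0 thus ?case by simp
next
  case (Suc k)
  have "snd (run10 (Suc k) (x,y)) = fib (2*k) * (x+y) + fib (Suc (2*k)) * (x + 2*y)"
    using Suc by (simp add: step10_def)
  also have "\<dots> = fib (2 * Suc k) * x + fib (Suc (2 * Suc k)) * y"
    by (simp add: algebra_simps)
  finally show ?case .
qed

lemma fst_run10: "fst (run10 k (x,y)) + fib (2*k) * x = fib (Suc (2*k)) * x + fib (2*k) * y"
proof (induction k arbitrary: x y)
  case 0 thus ?case by simp
next
  case (Suc k)
  have "fst (run10 (Suc k) (x,y)) + fib (2*k) * (x+y) = fib (Suc (2*k)) * (x+y) + fib (2*k) * (x + 2*y)"
    using Suc[of "x+y" "x+2*y"] by (simp add: step10_def)
  thus ?case by (simp add: algebra_simps)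
qed

lemma run10_fst_le_snd: "fst (run10 k st) \<le> snd (run10 k st)" if "fst st \<le> snd st"
  using that by (induction k arbitrary: st) (auto simp: step10_def)

lemma run10_fst_less_snd: "fst (run10 k st) < snd (run10 k st)" if "fst st < snd st"
  using that by (induction k arbitrary: st) (auto simp: step10_def)

lemma run10_mono: "fst st \<le> fst st' \<Longrightarrow> snd st \<le> snd st' \<Longrightarrow>
    fst (run10 k st) \<le> fst (run10 k st') \<and> snd (run10 k st) \<le> snd (run10 k st')"
  by (induction k arbitrary: st st') (auto simp: step10_def)

lemma run10_Suc_diff: "snd (run10 (Suc k) st) - fst (run10 (Suc k) st) = snd (run10 k st)"
proof -
  have "run10 (Suc k) st = step10 (run10 k st)" using run10_add[of k 1 st] by simp
  thus ?thesis by (simp add: step10_def)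
qed

lemma run10_diff_lower:
  assumes "fst s0 \<le> fst s" "snd s0 \<le> snd s" "fst s \<le> snd s" "1 \<le> b"
  shows "snd (run10 (b - 1) s0) \<le> snd (run10 b s) - fst (run10 b s)"
proof -
  obtain b' where b: "b = Suc b'" using assms(4) by (cases b) auto
  have "snd (run10 b s) - fst (run10 b s) = snd (run10 b' s)" using run10_Suc_diff b by simp
  moreover have "snd (run10 b' s0) \<le> snd (run10 b' s)" using run10_mono[OF assms(1,2)] by simp
  ultimately show ?thesis using b by simp
qed

lemma run10_0_1: "run10 a (0,1) = (fib (2*a), fib (Suc (2*a)))"
  using fst_run10[of a 0 1] snd_run10[of a 0 1] by (cases "run10 a (0,1)") simp

lemma path_loss_10: "fst st \<le> snd st \<Longrightarrow> rest \<noteq> [] \<Longrightarrow>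
    path_loss (True # False # rest) st = path_loss rest (step10 st)"
proof -
  assume le: "fst st \<le> snd st" and r: "rest \<noteq> []"
  obtain k where k: "length rest = Suc k" using r by (cases rest) auto
  obtain x y where st: "st = (x,y)" by fastforce
  have "loss True (x,y) (Suc (length (False#rest))) = 0" using le st k by (simp add: loss_True_Suc_Suc)
  moreover have "loss False (x+y,y) (Suc (length rest)) = 0" using k by (simp add: loss_False_Suc_Suc)
  moreover have "stern_step False (stern_step True (x,y)) = step10 (x,y)"
    by (simp add: stern_step_def step10_def)
  ultimately show ?thesis using st by (simp add: stern_step_def)
qed

lemma path_loss_rep10: "fst st \<le> snd st \<Longrightarrow> rest \<noteq> [] \<Longrightarrow>
    path_loss (rep10 k @ rest) st = path_loss rest (run10 k st)"
proof (induction k arbitrary: st)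
  case 0 thus ?case by simp
next
  case (Suc k)
  have "path_loss (rep10 (Suc k) @ rest) st = path_loss (rep10 k @ rest) (step10 st)"
    using path_loss_10[OF Suc.prems(1), of "rep10 k @ rest"] Suc.prems(2) by simp
  also have "\<dots> = path_loss rest (run10 k (step10 st))"
    using Suc.IH[of "step10 st"] Suc.prems by (simp add: step10_def)
  finally show ?case by simp
qed

lemma path_loss_False: "rest \<noteq> [] \<Longrightarrow>
    path_loss (False # rest) st = fib (length rest) * (snd st - fst st) + path_loss rest (stern_step False st)"
proof -
  assume r: "rest \<noteq> []"
  obtain k where k: "length rest = Suc k" using r by (cases rest) auto
  obtain x y where st: "st = (x,y)" by fastforce
  show ?thesis using k st by (simp add: loss_False_Suc_Suc)
qed

lemma path_loss_1: "path_loss [True] st = 0"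
proof -
  obtain x y where "st = (x,y)" by fastforce
  thus ?thesis by (simp add: loss_True_1)
qed

lemma path_loss_11: "fst st \<le> snd st \<Longrightarrow> path_loss [True, True] st = 0"
proof -
  assume a: "fst st \<le> snd st"
  obtain x y where st: "st = (x,y)" by fastforce
  have "path_loss [True, True] (x,y) = loss True (x,y) (Suc (Suc 0)) + loss True (x+y,y) (Suc 0)"
    by (simp add: stern_step_def)
  thus ?thesis using a st by (simp add: loss_True_1 loss_True_Suc_Suc)
qed

definition trailer :: "bool list \<Rightarrow> bool" where
  "trailer E \<longleftrightarrow> E = [True] \<or> E = [True, True]"

lemma path_loss_rep10_trailer: "fst st \<le> snd st \<Longrightarrow> trailer E \<Longrightarrow>
    path_loss (rep10 k @ E) st = 0"
proof -
  assume a: "fst st \<le> snd st" "trailer E"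
  have "E \<noteq> []" using a(2) unfolding trailer_def by auto
  hence "path_loss (rep10 k @ E) st = path_loss E (run10 k st)" using path_loss_rep10 a(1) by blast
  moreover have "path_loss E (run10 k st) = 0"
    using a run10_fst_le_snd[of st k] path_loss_1[of "run10 k st"] path_loss_11[of "run10 k st"]
    unfolding trailer_def by (elim disjE) (simp_all del: path_loss.simps)
  ultimately show ?thesis by simp
qed

lemma path_loss_rep10_False: "fst st \<le> snd st \<Longrightarrow> rest \<noteq> [] \<Longrightarrow>
  path_loss (rep10 k @ False # rest) st = fib (length rest) * (snd (run10 k st) - fst (run10 k st)) + path_loss rest (stern_step False (run10 k st))"
  using path_loss_rep10[of st "False # rest" k] path_loss_False[of rest "run10 k st"] by simp

lemma path_loss_rep10_False_ge: "fst st \<le> snd st \<Longrightarrow> rest \<noteq> [] \<Longrightarrow>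
  fib (length rest) * (snd (run10 k st) - fst (run10 k st)) \<le> path_loss (rep10 k @ False # rest) st"
  using path_loss_rep10_False by simp

lemma record_word_from_append_iff:
  "record_word_from (x @ y) st \<longleftrightarrow>
    (\<forall>q r. x = q @ True # r \<longrightarrow>
       path_loss (True # r @ y) (stern_run q st) < loss False (stern_run q st) (Suc (length r + length y)))
    \<and> record_word_from y (stern_run x st)"
proof
  assume h: "record_word_from (x @ y) st"
  have "record_word_from y (stern_run x st)"
    unfolding record_word_from_def
  proof (intro allI impI)
    fix q r assume "y = q @ True # r"
    hence "x @ y = (x @ q) @ True # r" by simp
    thus "path_loss (True # r) (stern_run q (stern_run x st)) < loss False (stern_run q (stern_run x st)) (Suc (length r))"
      using h unfolding record_word_from_def by fastforce
  qed
  moreover have "path_loss (True # r @ y) (stern_run q st) < loss False (stern_run q st) (Suc (length r + length y))"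
    if "x = q @ True # r" for q r
    using h[unfolded record_word_from_def, rule_format, of q "r @ y"] that by simp
  ultimately show "(\<forall>q r. x = q @ True # r \<longrightarrow>
       path_loss (True # r @ y) (stern_run q st) < loss False (stern_run q st) (Suc (length r + length y)))
    \<and> record_word_from y (stern_run x st)"
    by blast
next
  assume h: "(\<forall>q r. x = q @ True # r \<longrightarrow>
       path_loss (True # r @ y) (stern_run q st) < loss False (stern_run q st) (Suc (length r + length y)))
    \<and> record_word_from y (stern_run x st)"
  show "record_word_from (x @ y) st"
    unfolding record_word_from_def
  proof (intro allI impI)
    fix q r assume "x @ y = q @ True # r"
    hence "(\<exists>r'. x = q @ True # r' \<and> r = r' @ y) \<or> (\<exists>q'. q = x @ q' \<and> y = q' @ True # r)"
      by (subst (asm) eq_commute) (auto simp: append_eq_append_conv2 Cons_eq_append_conv)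
    thus "path_loss (True # r) (stern_run q st) < loss False (stern_run q st) (Suc (length r))"
      using h unfolding record_word_from_def by auto
  qed
qed

lemma record_word_from_Cons_False_iff:
  "record_word_from (False # y) st \<longleftrightarrow> record_word_from y (stern_step False st)"
  using record_word_from_append_iff[of "[False]" y st] by (simp add: Cons_eq_append_conv)

lemma record_word_from_trailer: "fst st < snd st \<Longrightarrow> trailer E \<Longrightarrow>
    record_word_from E st"
proof -
  assume a: "fst st < snd st" "trailer E"
  obtain x y where st: "st = (x,y)" by fastforce
  have c1: "record_word_from [True] (x,y)" if "x < y" for x y
    using that unfolding record_word_from_def by (auto simp: Cons_eq_append_conv loss_True_1 loss_False_1)
  have c2: "record_word_from [True,True] (x,y)" if "x < y" for x y
  proof -
    have "path_loss [True, True] (x,y) = 0" using path_loss_11[of "(x,y)"] that by simp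
    moreover have "loss False (x,y) (Suc (Suc 0)) > 0" using that by (simp add: loss_False_Suc_Suc)
    moreover have "path_loss [True] (x+y,y) = 0" by (rule path_loss_1)
    moreover have "loss False (x+y,y) (Suc 0) > 0" using that by (simp add: loss_False_1)
    ultimately show ?thesis unfolding record_word_from_def
      by (auto simp: Cons_eq_append_conv stern_step_def simp del: path_loss.simps)
  qed
  show ?thesis using a st c1 c2 unfolding trailer_def by auto
qed

lemma record_word_from_rep10_iff:
  assumes le: "fst st \<le> snd st" and y: "y \<noteq> []"
  shows "record_word_from (rep10 k @ y) st \<longleftrightarrow>
    (\<forall>i<k. path_loss y (run10 k st) < loss False (run10 i st) (2 * (k - i) + length y))
    \<and> record_word_from y (run10 k st)"
proof -
  have at_bit: "path_loss (True # False # rep10 (k - Suc i) @ y) (run10 i st) = path_loss y (run10 k st)"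
    if "i < k" for i
  proof -
    have "k - i = Suc (k - Suc i)" using that by arith
    hence "True # False # rep10 (k - Suc i) @ y = rep10 (k - i) @ y" by simp
    hence "path_loss (True # False # rep10 (k - Suc i) @ y) (run10 i st) = path_loss (rep10 (k - i) @ y) (run10 i st)"
      by (simp only:)
    also have "\<dots> = path_loss y (run10 (k - i) (run10 i st))"
      by (rule path_loss_rep10[OF run10_fst_le_snd[OF le] y])
    also have "\<dots> = path_loss y (run10 k st)" using that run10_add[of i "k - i" st] by simp
    finally show ?thesis .
  qed
  have each: "path_loss (True # (False # rep10 (k - Suc i)) @ y) (run10 i st)
        < loss False (run10 i st) (Suc (length (False # rep10 (k - Suc i)) + length y))
      \<longleftrightarrow> path_loss y (run10 k st) < loss False (run10 i st) (2 * (k - i) + length y)" if "i < k" for i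
  proof -
    have "Suc (length (False # rep10 (k - Suc i)) + length y) = 2 * (k - i) + length y"
      using that by simp
    thus ?thesis using at_bit[OF that] by (simp only: append_Cons)
  qed
  have split: "(\<forall>q r. rep10 k = q @ True # r \<longrightarrow> R q r) \<longleftrightarrow> (\<forall>i<k. R (rep10 i) (False # rep10 (k - Suc i)))"
    for R by (auto simp: rep10_eq_True_iff)
  show ?thesis
    unfolding record_word_from_append_iff split stern_run_rep10 using each by blast
qed

lemma record_word_from_rep10_False_iff:
  assumes le: "fst st \<le> snd st" and z: "z \<noteq> []"
  shows "record_word_from (rep10 k @ False # z) st \<longleftrightarrow>
    (\<forall>i<k. fib (length z) * (snd (run10 k st) - fst (run10 k st)) + path_loss z (stern_step False (run10 k st))
           < fib (2 * (k - i) + length z) * (snd (run10 i st) - fst (run10 i st)))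
    \<and> record_word_from z (stern_step False (run10 k st))"
proof -
  have "loss False (run10 i st) (2 * (k - i) + length (False # z))
      = fib (2 * (k - i) + length z) * (snd (run10 i st) - fst (run10 i st))" if "i < k" for i
    using that loss_False_ge_2[of "2 * (k - i) + length (False # z)" "run10 i st"] by simp
  thus ?thesis
    using record_word_from_rep10_iff[OF le, of "False # z" k] path_loss_False[OF z, of "run10 k st"]
    by (simp add: record_word_from_Cons_False_iff del: path_loss.simps)
qed

lemma record_word_from_rep10_trailer:
  assumes lt: "fst st < snd st" and E: "trailer E"
  shows "record_word_from (rep10 k @ E) st"
proof -
  have "E \<noteq> []" using E by (auto simp: trailer_def)
  moreover have "path_loss E (run10 k st) = 0"
    using path_loss_rep10_trailer[of "run10 k st" E 0] less_imp_le[OF run10_fst_less_snd[OF lt]] E by simp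
  moreover have "0 < loss False (run10 i st) (2 * (k - i) + length E)" if "i < k" for i
    using that lt run10_fst_less_snd[of st i] by (intro loss_False_pos) auto
  ultimately show ?thesis
    using lt E run10_fst_less_snd[of st k]
    by (simp add: record_word_from_rep10_iff record_word_from_trailer)
qed

text \<open>The loss at the (i+1)-st 1-bit of a word (10)^a 0 z of length n read from (0, 1),
  for i \<le> a (see record_word_rep10_False_iff).\<close>

definition loss10 :: "nat \<Rightarrow> nat \<Rightarrow> nat" where
  "loss10 n i = fib (n - 2 * i - 1) * (fib (2 * i + 1) - fib (2 * i))"

lemma loss10_0: "loss10 n 0 = fib (n - 1)" by (simp add: loss10_def)

lemma loss10_Suc: "loss10 n (Suc i) = fib (n - 2*i - 3) * fib (2*i+1)"
  by (simp add: loss10_def numeral_3_eq_3)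

lemma loss10_shift_1:
  assumes "a = i + t" "n = 2*a + 2*i + e" "i \<ge> 1"
  shows "loss10 n i = loss10 n a + fib (2*t) * fib e"
proof -
  obtain i' where i: "i = Suc i'" using assms(3) by (cases i) auto
  have v: "fib (2*i'+1) * fib (2*i'+1+e + 2*t) = fib (2*i'+1 + 2*t) * fib (2*i'+1+e) + fib (2*t) * fib e"
    using fib_vajda_odd[of "2*i'+1" "2*i'+1+e" "2*t"] by simp
  have "loss10 n i = fib (2*i'+1+e + 2*t) * fib (2*i'+1)" using assms i by (simp add: loss10_Suc add_ac)
  moreover have "loss10 n a = fib (2*i'+1+e) * fib (2*i'+1 + 2*t)"
    using assms i by (simp add: loss10_Suc add.commute[of t] add.assoc)
  ultimately show ?thesis using v by (simp add: algebra_simps add_ac)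
qed

lemma loss10_shift_2:
  assumes "a = i + t" "n + e = 2*a + 2*i" "n \<ge> 2*a + 2" "i \<ge> 1" "odd n"
  shows "loss10 n i = loss10 n a + fib (2*t) * fib e"
proof -
  obtain i' where i: "i = Suc i'" using assms(4) by (cases i) auto
  obtain h where h: "n = 2*a + 2 + h" using assms(3) le_Suc_ex by blast
  have eh: "e + h + 1 = 2*i' + 1" using assms(1,2) h i by simp
  have ev: "even (h+1)" using assms(5) h by simp
  have pq: "2*i'+1 - (h+1) = e" using eh by arith
  have v: "fib (h+1 + 2*t) * fib (2*i'+1) = fib (h+1) * fib (2*i'+1 + 2*t) + fib (2*t) * fib e"
    using fib_vajda_even[of "h+1" "2*i'+1" "2*t"] eh ev pq by simp
  have "loss10 n i = fib (h+1 + 2*t) * fib (2*i'+1)" using assms i h by (simp add: loss10_Suc add_ac)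
  moreover have "loss10 n a = fib (h+1) * fib (2*i'+1 + 2*t)"
    using assms i h by (simp add: loss10_Suc add.commute[of t] add.assoc)
  ultimately show ?thesis using v by (simp add: algebra_simps)
qed

lemma loss10_shift_3:
  assumes "a = i + t" "n + e = 2*a + 2*i" "n \<ge> 2*a + 2" "i \<ge> 1" "even n"
  shows "loss10 n a = loss10 n i + fib (2*t) * fib e"
proof -
  obtain i' where i: "i = Suc i'" using assms(4) by (cases i) auto
  obtain h where h: "n = 2*a + 2 + h" using assms(3) le_Suc_ex by blast
  have eh: "e + h + 1 = 2*i' + 1" using assms(1,2) h i by simp
  have ev: "odd (h+1)" using assms(5) h by simp
  have pq: "2*i'+1 - (h+1) = e" using eh by arith
  have v: "fib (h+1) * fib (2*i'+1 + 2*t) = fib (h+1 + 2*t) * fib (2*i'+1) + fib (2*t) * fib e"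
    using fib_vajda_odd[of "h+1" "2*i'+1" "2*t"] eh ev pq by simp
  have "loss10 n i = fib (h+1 + 2*t) * fib (2*i'+1)" using assms i h by (simp add: loss10_Suc add_ac)
  moreover have "loss10 n a = fib (h+1) * fib (2*i'+1 + 2*t)"
    using assms i h by (simp add: loss10_Suc add.commute[of t] add.assoc)
  ultimately show ?thesis using v by (simp add: algebra_simps)
qed

lemma loss10_less_0: "1 \<le> a \<Longrightarrow> 2*a + 2 \<le> n \<Longrightarrow> loss10 n a < loss10 n 0"
proof -
  assume a: "1 \<le> a" "2*a + 2 \<le> n"
  then obtain a' where a': "a = Suc a'" by (cases a) auto
  have "loss10 n a = fib (n - 2*a' - 3) * fib (2*a' + 1)" using a' by (simp add: loss10_Suc)
  also have "\<dots> \<le> fib (n - 2*a' - 3 + (2*a' + 1) - 1)" using a a' by (intro fib_mult_le) auto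
  also have "n - 2*a' - 3 + (2*a' + 1) - 1 = n - 3" using a a' by arith
  finally have le: "loss10 n a \<le> fib (n - 3)" .
  obtain m where m: "n = Suc (Suc (Suc m))" using a by (cases n; cases "n - 1"; cases "n - 2") auto
  have "fib (Suc m) \<ge> 1" by (rule fib_ge_1) simp
  hence "fib (n - 3) < fib (n - 1)" using m by simp
  thus ?thesis using le by (simp add: loss10_0)
qed

lemma loss10_strict_min: "i < a \<Longrightarrow> 2*a + 2 \<le> n \<Longrightarrow>
    (2*a + 2*i < n \<or> odd n) \<Longrightarrow> loss10 n a < loss10 n i"
proof -
  assume ia: "i < a" and an: "2*a + 2 \<le> n" and c: "2*a + 2*i < n \<or> odd n"
  show ?thesis
  proof (cases "i = 0")
    case True thus ?thesis using loss10_less_0 ia an by auto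
  next
    case False
    define t where "t = a - i"
    have t: "a = i + t" "t \<ge> 1" using ia by (auto simp: t_def)
    have Ft: "fib (2*t) \<ge> 1" using t by (intro fib_ge_1) auto
    show ?thesis
    proof (cases "2*a + 2*i \<le> n")
      case True
      then obtain e where e: "n = 2*a + 2*i + e" using le_Suc_ex by blast
      have d: "loss10 n i = loss10 n a + fib (2*t) * fib e" using loss10_shift_1[OF t(1) e] False by simp
      have "e \<ge> 1" using c e by (cases e) auto
      hence "fib e \<ge> 1" by (rule fib_ge_1)
      thus ?thesis using d Ft by (simp add: less_le_trans[OF _ mult_le_mono[OF Ft]] )
    next
      case False2: False
      define e where "e = 2*a + 2*i - n"
      have e: "n + e = 2*a + 2*i" using False2 by (simp add: e_def)
      have on: "odd n" using c False2 by auto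
      have d: "loss10 n i = loss10 n a + fib (2*t) * fib e" using loss10_shift_2[OF t(1) e an _ on] False
        by simp
      have "e \<ge> 1" using e False2 by auto
      hence "fib e \<ge> 1" by (rule fib_ge_1)
      thus ?thesis using d Ft by (simp add: less_le_trans[OF _ mult_le_mono[OF Ft]] )
    qed
  qed
qed

lemma loss10_pred_le: "even n \<Longrightarrow> 2 \<le> a \<Longrightarrow> 2*a + 2 \<le> n \<Longrightarrow>
    n \<le> 4*a - 2 \<Longrightarrow> loss10 n (a - 1) \<le> loss10 n a"
proof -
  assume a: "even n" "2 \<le> a" "2*a + 2 \<le> n" "n \<le> 4*a - 2"
  have ai: "a = (a - 1) + 1" using a by simp
  show ?thesis
  proof (cases "n = 4*a - 2")
    case True
    have "n = 2*a + 2*(a-1) + 0" using True a by simp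
    from loss10_shift_1[OF ai this] a show ?thesis by simp
  next
    case False
    have "n + (4*a - 2 - n) = 2*a + 2*(a-1)" using a False by simp
    from loss10_shift_3[OF ai this] a show ?thesis by simp
  qed
qed

lemma loss10_pred_le_fib: "2 \<le> a \<Longrightarrow> 2*a + 3 \<le> n \<Longrightarrow>
    loss10 n (a - 1) \<le> loss10 n a + fib (n - 6)"
proof -
  assume a: "2 \<le> a" "2*a + 3 \<le> n"
  have ai: "a = (a - 1) + 1" using a by simp
  show ?thesis
  proof (cases "4*a - 2 \<le> n")
    case True
    have "n = 2*a + 2*(a-1) + (n - (4*a - 2))" using True a by simp
    from loss10_shift_1[OF ai this] a have "loss10 n (a-1) = loss10 n a + fib (n - (4*a - 2))"
      by (simp add: eval_nat_numeral)
    moreover have "fib (n - (4*a - 2)) \<le> fib (n - 6)" using a by (intro fib_mono) auto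
    ultimately show ?thesis by simp
  next
    case False
    have e: "n + (4*a - 2 - n) = 2*a + 2*(a-1)" using a False by simp
    show ?thesis
    proof (cases "odd n")
      case True
      from loss10_shift_2[OF ai e] a True have "loss10 n (a-1) = loss10 n a + fib (4*a - 2 - n)"
        by (simp add: eval_nat_numeral)
      moreover have "fib (4*a - 2 - n) \<le> fib (n - 6)" using a by (intro fib_mono) auto
      ultimately show ?thesis by simp
    next
      case False
      from loss10_shift_3[OF ai e] a False show ?thesis by simp
    qed
  qed
qed

lemma run10_1_3: "run10 i (1,3) = (lucas (2*i+1), lucas (2*i+2))"
proof (induction i)
  case 0 thus ?case by (simp add: numeral_3_eq_3)
next
  case (Suc i)
  have "run10 (Suc i) (1,3) = step10 (run10 i (1,3))" using run10_add[of i 1 "(1,3)"] by simp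
  also have "\<dots> = (lucas (2*i+1) + lucas (2*i+2), lucas (2*i+1) + 2 * lucas (2*i+2))" using Suc
    by (simp add: step10_def)
  also have "\<dots> = (lucas (2 * Suc i + 1), lucas (2 * Suc i + 2))"
    by (simp add: eval_nat_numeral)
  finally show ?case .
qed

lemma run10_1_3_diff: "snd (run10 b (1, 3)) - fst (run10 b (1, 3)) = lucas (2 * b)"
  unfolding run10_1_3 using lucas_plus_2[of "2 * b"] by simp

text \<open>The analogue of loss10 for the part (10)^b 0 z of a word 100 (10)^b 0 z of length n,
  which is read from (1, 3) = (a(4), a(5)).\<close>

definition loss100 :: "nat \<Rightarrow> nat \<Rightarrow> nat" where
  "loss100 n i = fib (n - 4 - 2 * i) * lucas (2 * i)"

lemma loss100_0: "loss100 n 0 = 2 * fib (n - 4)" by (simp add: loss100_def)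

lemma loss100_large: "4 + 4*i \<le> n \<Longrightarrow> loss100 n i = fib (n - 4) + fib (n - 4 - 4*i)"
proof -
  assume a: "4 + 4*i \<le> n"
  have "int (fib (n - 4 - 2*i)) * int (lucas (2*i)) = int (fib (n - 4 - 2*i + 2*i)) + (-1)^(2*i) * int (fib (n - 4 - 2*i - 2*i))"
    using a by (intro fib_mult_lucas_ge) auto
  moreover have "n - 4 - 2*i + 2*i = n - 4" "n - 4 - 2*i - 2*i = n - 4 - 4*i" using a by auto
  ultimately show ?thesis unfolding loss100_def by (simp add: of_nat_mult[symmetric] del: of_nat_mult)
qed

lemma loss100_small_odd: "n < 4 + 4*i \<Longrightarrow> 4 + 2*i \<le> n \<Longrightarrow> odd n \<Longrightarrow>
    loss100 n i = fib (n - 4) + fib (4*i + 4 - n)"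
proof -
  assume a: "n < 4 + 4*i" "4 + 2*i \<le> n" "odd n"
  have "int (fib (n - 4 - 2*i)) * int (lucas (2*i)) = int (fib (n - 4 - 2*i + 2*i)) - (-1)^(n - 4 - 2*i) * int (fib (2*i - (n - 4 - 2*i)))"
    using a by (intro fib_mult_lucas_le) auto
  moreover have "n - 4 - 2*i + 2*i = n - 4" "2*i - (n - 4 - 2*i) = 4*i + 4 - n" using a by auto
  moreover have "odd (n - 4 - 2*i)" using a by auto
  ultimately show ?thesis unfolding loss100_def by (simp add: of_nat_mult[symmetric] del: of_nat_mult)
qed

lemma loss100_small_even: "n < 4 + 4*i \<Longrightarrow> 4 + 2*i \<le> n \<Longrightarrow> even n \<Longrightarrow>
    loss100 n i + fib (4*i + 4 - n) = fib (n - 4)"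
proof -
  assume a: "n < 4 + 4*i" "4 + 2*i \<le> n" "even n"
  have "int (fib (n - 4 - 2*i)) * int (lucas (2*i)) = int (fib (n - 4 - 2*i + 2*i)) - (-1)^(n - 4 - 2*i) * int (fib (2*i - (n - 4 - 2*i)))"
    using a by (intro fib_mult_lucas_le) auto
  moreover have "n - 4 - 2*i + 2*i = n - 4" "2*i - (n - 4 - 2*i) = 4*i + 4 - n" using a by auto
  moreover have "even (n - 4 - 2*i)" using a by auto
  ultimately show ?thesis unfolding loss100_def by (simp add: of_nat_mult[symmetric] del: of_nat_mult)
qed

lemma loss100_strict_min: "i < b \<Longrightarrow> 4 + 2*b \<le> n \<Longrightarrow>
    (even n \<or> 4*b + 3 \<le> n) \<Longrightarrow> loss100 n b < loss100 n i"
proof -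
  assume ib: "i < b" and bn: "4 + 2*b \<le> n" and c: "even n \<or> 4*b + 3 \<le> n"
  show ?thesis
  proof (cases "4 + 4*b \<le> n")
    case True
    have "loss100 n b = fib (n - 4) + fib (n - 4 - 4*b)" by (rule loss100_large[OF True])
    moreover have "loss100 n i = fib (n - 4) + fib (n - 4 - 4*i)"
      by (rule loss100_large) (use ib True in simp)
    moreover have "fib (n - 4 - 4*b) < fib (n - 4 - 4*i)" using ib True by (intro fib_less_fib) auto
    ultimately show ?thesis by linarith
  next
    case False
    show ?thesis
    proof (cases "even n")
      case True
      have eb: "loss100 n b + fib (4*b + 4 - n) = fib (n - 4)" using False bn True
        by (intro loss100_small_even) auto
      have "fib (4*b + 4 - n) \<ge> 1" using False by (intro fib_ge_1) auto
      show ?thesis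
      proof (cases "4 + 4*i \<le> n")
        case True
        hence "loss100 n i = fib (n - 4) + fib (n - 4 - 4*i)" by (rule loss100_large)
        thus ?thesis using eb \<open>fib (4*b + 4 - n) \<ge> 1\<close> by linarith
      next
        case False2: False
        have ei: "loss100 n i + fib (4*i + 4 - n) = fib (n - 4)" using False2 bn ib True
          by (intro loss100_small_even) auto
        have "fib (4*i + 4 - n) < fib (4*b + 4 - n)" using ib False2 by (intro fib_less_fib) auto
        thus ?thesis using eb ei by linarith
      qed
    next
      case odd: False
      hence n: "n = 4*b + 3" using c False by auto
      have eb: "loss100 n b = fib (n - 4) + fib (4*b + 4 - n)" using n bn odd
        by (intro loss100_small_odd) auto
      have ei: "loss100 n i = fib (n - 4) + fib (n - 4 - 4*i)" using n ib by (intro loss100_large) auto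
      have "fib (4*b + 4 - n) < fib (n - 4 - 4*i)" using n ib by (intro fib_less_fib) auto
      thus ?thesis using eb ei by linarith
    qed
  qed
qed

lemma loss100_pred_le: "odd n \<Longrightarrow> 1 \<le> b \<Longrightarrow> 4 + 2*b \<le> n \<Longrightarrow>
    n \<le> 4*b + 1 \<Longrightarrow> loss100 n (b - 1) \<le> loss100 n b"
proof -
  assume a: "odd n" "1 \<le> b" "4 + 2*b \<le> n" "n \<le> 4*b + 1"
  then obtain b' where b: "b = Suc b'" by (cases b) auto
  have eb: "loss100 n b = fib (n - 4) + fib (4*b + 4 - n)" using a by (intro loss100_small_odd) auto
  show ?thesis
  proof (cases "4 * b \<le> n")
    case True
    hence "loss100 n b' = fib (n - 4) + fib (n - 4 - 4*b')" using b by (intro loss100_large) auto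
    moreover have "fib (n - 4 - 4*b') \<le> fib (4*b + 4 - n)" using True a b by (intro fib_mono) auto
    ultimately show ?thesis using eb b by simp
  next
    case False
    hence "loss100 n b' = fib (n - 4) + fib (4*b' + 4 - n)" using a b by (intro loss100_small_odd) auto
    moreover have "fib (4*b' + 4 - n) \<le> fib (4*b + 4 - n)" using b by (intro fib_mono) auto
    ultimately show ?thesis using eb b by simp
  qed
qed

lemma loss100_pred_le_fib: "2 \<le> b \<Longrightarrow> 2*b + 6 \<le> n \<Longrightarrow>
    loss100 n (b - 1) \<le> loss100 n b + fib (n - 6)"
proof -
  assume a: "2 \<le> b" "2*b + 6 \<le> n"
  then obtain b' where b: "b = Suc b'" by (cases b) auto
  have F6: "fib (n - 6) \<ge> 3" using a by (intro fib_ge_3) auto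
  have bm: "b - 1 = b'" using b by simp
  have "loss100 n b' \<le> loss100 n b + fib (n - 6)"
  proof (cases "4 + 4*b \<le> n")
    case True
    hence "loss100 n b = fib (n - 4) + fib (n - 4 - 4*b)" by (rule loss100_large)
    moreover have "loss100 n b' = fib (n - 4) + fib (n - 4 - 4*b')" using True b by (intro loss100_large) auto
    moreover have "fib (n - 4 - 4*b') \<le> fib (n - 6)" using a b by (intro fib_mono) auto
    ultimately show ?thesis using b by simp
  next
    case False
    show ?thesis
    proof (cases "4*b \<le> n")
      case True
      have eb': "loss100 n b' = fib (n - 4) + fib (n - 4 - 4*b')" using True b by (intro loss100_large) auto
      have "n - 4 - 4*b' \<le> 3" using False b by auto
      hence "fib (n - 4 - 4*b') \<le> fib 3" by (rule fib_mono)
      hence small: "fib (n - 4 - 4*b') \<le> 2" by (simp add: eval_nat_numeral)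
      show ?thesis
      proof (cases "even n")
        case True
        have eb: "loss100 n b + fib (4*b + 4 - n) = fib (n - 4)" using False a True
          by (intro loss100_small_even) auto
        have "n = 4*b \<or> n = 4*b + 2" using True False \<open>4*b \<le> n\<close> by presburger
        hence "fib (n - 4 - 4*b') + fib (4*b + 4 - n) \<le> 3" using b by (auto simp: eval_nat_numeral)
        thus ?thesis using eb eb' F6 by linarith
      next
        case odd: False
        have eb: "loss100 n b = fib (n - 4) + fib (4*b + 4 - n)" using False a odd
          by (intro loss100_small_odd) auto
        thus ?thesis using eb' small F6 by linarith
      qed
    next
      case False2: False
      show ?thesis
      proof (cases "even n")
        case True
        have eb: "loss100 n b + fib (4*b + 4 - n) = fib (n - 4)" using False a True
          by (intro loss100_small_even) auto
        have eb': "loss100 n b' + fib (4*b' + 4 - n) = fib (n - 4)" using False2 a b True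
          by (intro loss100_small_even) auto
        have "fib (4*b + 4 - n) \<le> fib (n - 6)" using a by (intro fib_mono) auto
        thus ?thesis using eb eb' b by linarith
      next
        case odd: False
        have eb: "loss100 n b = fib (n - 4) + fib (4*b + 4 - n)" using False a odd
          by (intro loss100_small_odd) auto
        have eb': "loss100 n b' = fib (n - 4) + fib (4*b' + 4 - n)" using False2 a b odd
          by (intro loss100_small_odd) auto
        have "fib (4*b' + 4 - n) \<le> fib (4*b + 4 - n)" using b by (intro fib_mono) auto
        thus ?thesis using eb eb' b by linarith
      qed
    qed
  qed
  thus ?thesis using bm by simp
qed

lemma loss100_less_fib: "n \<ge> 6 \<Longrightarrow> (\<forall>i<b. loss100 n b < loss100 n i) \<Longrightarrow>
    loss100 n b < fib (n - 2)"
proof -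
  assume n: "n \<ge> 6" and lt: "\<forall>i<b. loss100 n b < loss100 n i"
  have "fib (n - 4) < fib (Suc (n - 4))" using n by (intro fib_less_fib_Suc) auto
  moreover have "Suc (n - 4) = n - 3" using n by simp
  moreover have "fib (n - 2) = fib (n - 3) + fib (n - 4)"
    using n fib_diff_rec[of "n - 2"] by (simp add: diff_diff_add)
  ultimately have "loss100 n 0 < fib (n - 2)" by (simp add: loss100_0)
  thus ?thesis using lt by (cases b) auto
qed

lemma record_word_rep10_False_iff:
  assumes z: "z \<noteq> []" and n: "n = 2 * a + 1 + length z"
  shows "record_word (rep10 a @ False # z) \<longleftrightarrow>
    (\<forall>i<a. loss10 n a + path_loss z (fib (2 * a), fib (2 * a + 2)) < loss10 n i)
    \<and> record_word_from z (fib (2 * a), fib (2 * a + 2))"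
proof -
  have "stern_step False (run10 a (0, 1)) = (fib (2 * a), fib (2 * a + 2))"
    unfolding run10_0_1 by (simp add: stern_step_def)
  moreover have "fib (length z) * (snd (run10 a (0, 1)) - fst (run10 a (0, 1))) = loss10 n a"
    unfolding run10_0_1 using n by (simp add: loss10_def)
  moreover have "fib (2 * (a - i) + length z) * (snd (run10 i (0, 1)) - fst (run10 i (0, 1))) = loss10 n i"
    if "i < a" for i
  proof -
    have "n - 2 * i - 1 = 2 * (a - i) + length z" using n that by simp
    thus ?thesis unfolding run10_0_1 by (simp add: loss10_def)
  qed
  ultimately show ?thesis
    using record_word_from_rep10_False_iff[of "(0, 1)" z a] z by simp
qed

lemma record_word_100_iff:
  assumes y: "y \<noteq> []" and n: "n = 3 + length y"
  shows "record_word ([True, False, False] @ y) \<longleftrightarrow>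
    fib (n - 3) + path_loss y (1, 3) < fib (n - 1) \<and> record_word_from y (1, 3)"
proof -
  have "[True, False, False] @ y = rep10 1 @ False # y" by simp
  moreover have "loss10 n 1 = fib (n - 3)" "loss10 n 0 = fib (n - 1)"
    by (simp_all add: loss10_def numeral_3_eq_3)
  moreover have "(fib (2 * 1), fib (2 * 1 + 2)) = (1, 3)" by (simp add: numeral_3_eq_3)
  ultimately show ?thesis using record_word_rep10_False_iff[OF y, of n 1] n by simp
qed

lemma stern_step_False_run10_1_3: "stern_step False (run10 b (1, 3)) = (lucas (2 * b + 1), lucas (2 * b + 3))"
  unfolding run10_1_3 by (simp add: stern_step_def eval_nat_numeral)

lemma path_loss_rep10_False_1_3:
  assumes z: "z \<noteq> []" and n: "n = 4 + 2 * b + length z"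
  shows "path_loss (rep10 b @ False # z) (1, 3) = loss100 n b + path_loss z (lucas (2 * b + 1), lucas (2 * b + 3))"
  using path_loss_rep10_False[of "(1, 3)" z b] z n
  unfolding run10_1_3_diff stern_step_False_run10_1_3 by (simp add: loss100_def)

lemma record_word_from_1_3_iff:
  assumes z: "z \<noteq> []" and n: "n = 4 + 2 * b + length z"
  shows "record_word_from (rep10 b @ False # z) (1, 3) \<longleftrightarrow>
    (\<forall>i<b. loss100 n b + path_loss z (lucas (2 * b + 1), lucas (2 * b + 3)) < loss100 n i)
    \<and> record_word_from z (lucas (2 * b + 1), lucas (2 * b + 3))"
proof -
  have "fib (length z) * lucas (2 * b) = loss100 n b"
    using n by (simp add: loss100_def)
  moreover have "fib (2 * (b - i) + length z) * lucas (2 * i) = loss100 n i" if "i < b" for i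
  proof -
    have "n - 4 - 2 * i = 2 * (b - i) + length z" using n that by simp
    thus ?thesis by (simp add: loss100_def)
  qed
  ultimately show ?thesis
    using record_word_from_rep10_False_iff[of "(1, 3)" z b] z
    unfolding run10_1_3_diff stern_step_False_run10_1_3 by simp
qed

section \<open>The seven families\<close>

lemma record_word_famAB: "trailer E \<Longrightarrow> record_word (rep10 k @ E)"
  by (rule record_word_from_rep10_trailer) auto

lemma record_word_famCD_iff:
  assumes E: "trailer E" and n: "n = 2 * a + 2 * b + 1 + length E"
  shows "record_word (rep10 a @ False # rep10 b @ E) \<longleftrightarrow> (\<forall>i<a. loss10 n a < loss10 n i)"
proof -
  have lt: "fib (2 * a) < fib (2 * a + 2)" by (rule fib_less_fib) simp
  have "E \<noteq> []" using E by (auto simp: trailer_def)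
  moreover have "path_loss (rep10 b @ E) (fib (2 * a), fib (2 * a + 2)) = 0"
    using E lt by (intro path_loss_rep10_trailer) auto
  moreover have "record_word_from (rep10 b @ E) (fib (2 * a), fib (2 * a + 2))"
    using E lt by (intro record_word_from_rep10_trailer) auto
  ultimately show ?thesis using record_word_rep10_False_iff[of "rep10 b @ E" n a] n by simp
qed

lemma record_word_famC_iff:
  assumes a: "1 \<le> a"
  shows "record_word (rep10 a @ False # rep10 b @ [True]) \<longleftrightarrow> a \<le> b + 1"
proof -
  define n where "n = 2 * a + 2 * b + 2"
  have "record_word (rep10 a @ False # rep10 b @ [True]) \<longleftrightarrow> (\<forall>i<a. loss10 n a < loss10 n i)"
    by (rule record_word_famCD_iff) (simp_all add: trailer_def n_def)
  also have "\<dots> \<longleftrightarrow> a \<le> b + 1"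
  proof
    assume min: "\<forall>i<a. loss10 n a < loss10 n i"
    show "a \<le> b + 1"
    proof (rule ccontr)
      assume "\<not> a \<le> b + 1"
      hence "loss10 n (a - 1) \<le> loss10 n a" by (intro loss10_pred_le) (auto simp: n_def)
      moreover have "loss10 n a < loss10 n (a - 1)" using min a by simp
      ultimately show False by simp
    qed
  qed (auto simp: n_def intro!: loss10_strict_min)
  finally show ?thesis .
qed

lemma record_word_famD: "1 \<le> a \<Longrightarrow> record_word (rep10 a @ False # rep10 b @ [True, True])"
  by (subst record_word_famCD_iff[where n = "2 * a + 2 * b + 3"])
    (auto simp: trailer_def intro!: loss10_strict_min)

lemma not_record_word_famC_a2:
  assumes w: "record_word (rep10 a @ False # rep10 b @ False # y)" and a: "2 \<le> a" and y: "y \<noteq> []"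
  shows False
proof -
  define n where "n = 2 * a + 2 * b + 2 + length y"
  define s where "s = (fib (2 * a), fib (2 * a + 2))"
  have s: "s = (fib (2 * a), fib (2 * a) + fib (Suc (2 * a)))" by (simp add: s_def)
  have lt: "loss10 n a + path_loss (rep10 b @ False # y) s < loss10 n (a - 1)"
    using w a record_word_rep10_False_iff[of "rep10 b @ False # y" n a] by (simp add: n_def s_def)
  have le: "fst s \<le> snd s" using s by simp
  have gap: "fib (2 * a + 2 * b - 1) \<le> snd (run10 b s) - fst (run10 b s)"
  proof (cases b)
    case 0
    have "fib (2 * a - 1) \<le> fib (Suc (2 * a))" by (rule fib_mono) simp
    thus ?thesis using 0 s by simp
  next
    case (Suc b')
    have "snd (run10 (b - 1) (run10 a (0, 1))) \<le> snd (run10 b s) - fst (run10 b s)"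
      using Suc run10_0_1[of a] by (intro run10_diff_lower) (auto simp: s)
    moreover have "run10 (b - 1) (run10 a (0, 1)) = run10 (a + (b - 1)) (0, 1)" by (simp only: run10_add)
    moreover have "snd (run10 (a + (b - 1)) (0, 1)) = fib (Suc (2 * (a + (b - 1))))"
      by (simp only: run10_0_1 snd_conv)
    moreover have "Suc (2 * (a + (b - 1))) = 2 * a + 2 * b - 1" using Suc by simp
    ultimately show ?thesis by (simp only:)
  qed
  have "fib (length y + (2 * a + 2 * b - 1) - 2) \<le> fib (length y) * (snd (run10 b s) - fst (run10 b s))"
    using y a gap by (intro fib_mult_ge_bound) (auto simp: Suc_le_eq)
  moreover have "length y + (2 * a + 2 * b - 1) - 2 = n - 5" using a by (simp add: n_def)
  ultimately have "fib (n - 5) \<le> fib (length y) * (snd (run10 b s) - fst (run10 b s))" by simp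
  moreover have "fib (n - 6) \<le> fib (n - 5)" by (rule fib_mono) simp
  moreover have "fib (length y) * (snd (run10 b s) - fst (run10 b s)) \<le> path_loss (rep10 b @ False # y) s"
    using path_loss_rep10_False_ge[OF le y] by simp
  moreover have "loss10 n (a - 1) \<le> loss10 n a + fib (n - 6)"
    using a y by (intro loss10_pred_le_fib) (auto simp: n_def Suc_le_eq)
  ultimately show False using lt by linarith
qed

lemma record_word_famEF_iff:
  assumes E: "trailer E" and n: "n = 2 * b + 2 * c + 4 + length E"
  shows "record_word ([True, False, False] @ rep10 b @ False # rep10 c @ E) \<longleftrightarrow>
    fib (n - 3) + loss100 n b < fib (n - 1) \<and> (\<forall>i<b. loss100 n b < loss100 n i)"
proof -
  have lt: "lucas (2 * b + 1) < lucas (2 * b + 3)"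
    using lucas_ge_1[of "2 * b"] by (simp add: eval_nat_numeral)
  have z: "rep10 c @ E \<noteq> []" using E by (auto simp: trailer_def)
  have n': "n = 4 + 2 * b + length (rep10 c @ E)" using n by simp
  have "path_loss (rep10 c @ E) (lucas (2 * b + 1), lucas (2 * b + 3)) = 0"
    using E lt by (intro path_loss_rep10_trailer) auto
  moreover have "record_word_from (rep10 c @ E) (lucas (2 * b + 1), lucas (2 * b + 3))"
    using E lt by (intro record_word_from_rep10_trailer) auto
  moreover have "n = 3 + length (rep10 b @ False # rep10 c @ E)" using n by simp
  ultimately show ?thesis
    using record_word_100_iff[of "rep10 b @ False # rep10 c @ E" n]
      record_word_from_1_3_iff[OF z n'] path_loss_rep10_False_1_3[OF z n']
    by simp
qed

lemma record_word_famE_iff: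
  "record_word ([True, False, False] @ rep10 b @ False # rep10 c @ [True]) \<longleftrightarrow> b \<le> c + 1 \<and> \<not> (b = 0 \<and> c = 0)"
proof -
  define n where "n = 2 * b + 2 * c + 5"
  have iff: "record_word ([True, False, False] @ rep10 b @ False # rep10 c @ [True]) \<longleftrightarrow>
      fib (n - 3) + loss100 n b < fib (n - 1) \<and> (\<forall>i<b. loss100 n b < loss100 n i)"
    by (rule record_word_famEF_iff) (simp_all add: trailer_def n_def)
  have fib_n: "fib (n - 1) = fib (n - 2) + fib (n - 3)"
    using fib_diff_rec[of "n - 1"] by (simp add: n_def)
  show ?thesis
  proof
    assume "b \<le> c + 1 \<and> \<not> (b = 0 \<and> c = 0)"
    moreover from this have min: "\<forall>i<b. loss100 n b < loss100 n i"
      by (auto simp: n_def intro!: loss100_strict_min)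
    ultimately have "loss100 n b < fib (n - 2)" by (intro loss100_less_fib) (auto simp: n_def)
    thus "record_word ([True, False, False] @ rep10 b @ False # rep10 c @ [True])"
      using iff min fib_n by simp
  next
    assume w: "record_word ([True, False, False] @ rep10 b @ False # rep10 c @ [True])"
    show "b \<le> c + 1 \<and> \<not> (b = 0 \<and> c = 0)"
    proof
      show "b \<le> c + 1"
      proof (rule ccontr)
        assume "\<not> b \<le> c + 1"
        hence "loss100 n (b - 1) \<le> loss100 n b" by (intro loss100_pred_le) (auto simp: n_def)
        moreover have "loss100 n b < loss100 n (b - 1)" using w iff \<open>\<not> b \<le> c + 1\<close>
          by simp
        ultimately show False by simp
      qed
      show "\<not> (b = 0 \<and> c = 0)"
      proof
        assume "b = 0 \<and> c = 0"
        with w iff show False by (simp add: n_def loss100_def eval_nat_numeral)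
      qed
    qed
  qed
qed

lemma record_word_famF: "record_word ([True, False, False] @ rep10 b @ False # rep10 c @ [True, True])"
proof -
  define n where "n = 2 * b + 2 * c + 6"
  have min: "\<forall>i<b. loss100 n b < loss100 n i" by (auto simp: n_def intro!: loss100_strict_min)
  hence "loss100 n b < fib (n - 2)" by (intro loss100_less_fib) (auto simp: n_def)
  moreover have "fib (n - 1) = fib (n - 2) + fib (n - 3)"
    using fib_diff_rec[of "n - 1"] by (simp add: n_def)
  ultimately show ?thesis
    using min by (subst record_word_famEF_iff[where n = n]) (auto simp: trailer_def n_def)
qed

lemma run10_1_4_diff: "fib (2*c + 2) \<le> snd (run10 c (1,4)) - fst (run10 c (1,4))"
proof -
  have s: "snd (run10 c (1,4)) = fib (2*c) + 4 * fib (Suc (2*c))" using snd_run10[of c 1 4] by simp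
  have f: "fst (run10 c (1,4)) + fib (2*c) = fib (Suc (2*c)) + 4 * fib (2*c)" using fst_run10[of c 1 4]
    by simp
  have "3 * fib (2*c) \<le> 2 * fib (Suc (2*c))" by (intro three_fib_le_two_fib_Suc) auto
  moreover have "fib (2*c + 2) = fib (2*c) + fib (Suc (2*c))" by (simp add: eval_nat_numeral)
  ultimately show ?thesis using s f by linarith
qed

lemma not_record_word_famE_b0:
  assumes w: "record_word ([True, False, False, False] @ rep10 c @ False # y)" and y: "y \<noteq> []"
  shows False
proof -
  define n where "n = 5 + 2 * c + length y"
  have z: "rep10 c @ False # y \<noteq> []" by simp
  have "fib (n - 3) + path_loss (rep10 0 @ False # rep10 c @ False # y) (1, 3) < fib (n - 1)"
    using w record_word_100_iff[of "rep10 0 @ False # rep10 c @ False # y" n] by (simp add: n_def)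
  moreover have "path_loss (rep10 0 @ False # rep10 c @ False # y) (1, 3)
      = 2 * fib (n - 4) + path_loss (rep10 c @ False # y) (1, 4)"
    using path_loss_rep10_False_1_3[OF z, of n 0] by (simp add: n_def loss100_def eval_nat_numeral)
  moreover have "fib (length y) * (snd (run10 c (1, 4)) - fst (run10 c (1, 4))) \<le> path_loss (rep10 c @ False # y) (1, 4)"
    using path_loss_rep10_False_ge[OF _ y] by simp
  moreover have "fib (length y + (2 * c + 2) - 2) \<le> fib (length y) * (snd (run10 c (1, 4)) - fst (run10 c (1, 4)))"
    using y run10_1_4_diff[of c] by (intro fib_mult_ge_bound) (auto simp: Suc_le_eq)
  moreover have "length y + (2 * c + 2) - 2 = n - 5" by (simp add: n_def)
  moreover have "fib (n - 1) = fib (n - 3) + 2 * fib (n - 4) + fib (n - 5)"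
    by (intro fib_minus_1_expand) (simp add: n_def)
  ultimately show False by simp
qed

lemma not_record_word_famE_b2:
  assumes w: "record_word ([True, False, False] @ rep10 b @ False # rep10 c @ False # y)"
    and b: "2 \<le> b" and y: "y \<noteq> []"
  shows False
proof -
  define n where "n = 5 + 2 * b + 2 * c + length y"
  define s where "s = (lucas (2 * b + 1), lucas (2 * b + 3))"
  have z: "rep10 c @ False # y \<noteq> []" by simp
  have n': "n = 4 + 2 * b + length (rep10 c @ False # y)" by (simp add: n_def)
  have "record_word_from (rep10 b @ False # rep10 c @ False # y) (1, 3)"
    using w record_word_100_iff[of "rep10 b @ False # rep10 c @ False # y" n] by (simp add: n_def)
  hence lt: "loss100 n b + path_loss (rep10 c @ False # y) s < loss100 n (b - 1)"
    using record_word_from_1_3_iff[OF z n'] b by (simp add: s_def)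
  have sv: "s = (lucas (2 * b + 1), lucas (2 * b + 1) + lucas (2 * b + 2))"
    by (simp add: s_def eval_nat_numeral)
  have le: "fst s \<le> snd s" using sv by simp
  have L2: "lucas (2 * b + 2) = fib (2 * b + 1) + fib (2 * b + 3)" using lucas_fib[of "2 * b + 1"]
    by (simp add: eval_nat_numeral)
  have L1: "lucas (2 * b + 1) = fib (2 * b) + fib (2 * b + 2)" using lucas_fib[of "2 * b"]
    by (simp add: eval_nat_numeral)
  have gap: "fib (2 * b + 2 * c + 1) \<le> snd (run10 c s) - fst (run10 c s)"
  proof (cases c)
    case 0
    have "fib (2 * b + 1) \<le> lucas (2 * b + 2)" using L2 by simp
    thus ?thesis using 0 sv by simp
  next
    case (Suc c')
    define s0 where "s0 = run10 (b + 1) (0, 1)"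
    have s0: "s0 = (fib (2 * b + 2), fib (2 * b + 3))" unfolding s0_def run10_0_1
      by (simp add: eval_nat_numeral)
    have "fib (2 * b + 3) \<le> lucas (2 * b + 2)" using L2 by simp
    hence "snd (run10 (c - 1) s0) \<le> snd (run10 c s) - fst (run10 c s)"
      using Suc le L1 by (intro run10_diff_lower) (auto simp: s0 sv)
    moreover have "run10 (c - 1) s0 = run10 (b + 1 + (c - 1)) (0, 1)" unfolding s0_def
      by (simp only: run10_add)
    moreover have "snd (run10 (b + 1 + (c - 1)) (0, 1)) = fib (Suc (2 * (b + 1 + (c - 1))))"
      by (simp only: run10_0_1 snd_conv)
    moreover have "Suc (2 * (b + 1 + (c - 1))) = 2 * b + 2 * c + 1" using Suc by simp
    ultimately show ?thesis by (simp only:)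
  qed
  have "fib (length y + (2 * b + 2 * c + 1) - 2) \<le> fib (length y) * (snd (run10 c s) - fst (run10 c s))"
    using y gap by (intro fib_mult_ge_bound) (auto simp: Suc_le_eq)
  moreover have "length y + (2 * b + 2 * c + 1) - 2 = n - 6" using y by (cases y) (auto simp: n_def)
  ultimately have "fib (n - 6) \<le> fib (length y) * (snd (run10 c s) - fst (run10 c s))" by simp
  moreover have "fib (length y) * (snd (run10 c s) - fst (run10 c s)) \<le> path_loss (rep10 c @ False # y) s"
    using path_loss_rep10_False_ge[OF le y] by simp
  moreover have "loss100 n (b - 1) \<le> loss100 n b + fib (n - 6)"
    using b y by (intro loss100_pred_le_fib) (auto simp: n_def Suc_le_eq)
  ultimately show False using lt by linarith
qed

lemma run10_4_11: "snd (run10 c (4,11)) = 4 * fib (2*c) + 11 * fib (Suc (2*c))"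
     "fst (run10 c (4,11)) + 4 * fib (2*c) = 4 * fib (Suc (2*c)) + 11 * fib (2*c)"
  using snd_run10[of c 4 11] fst_run10[of c 4 11] by (simp_all add: algebra_simps)

lemma run10_4_11_ratio: "3 * fst (run10 i (4,11)) < 2 * snd (run10 i (4,11))"
proof (induction i)
  case 0 thus ?case by simp
next
  case (Suc i)
  have lt: "fst (run10 i (4,11)) < snd (run10 i (4,11))" by (rule run10_fst_less_snd) simp
  have "run10 (Suc i) (4,11) = step10 (run10 i (4,11))" using run10_add[of i 1 "(4,11)"] by simp
  thus ?case using lt by (simp add: step10_def)
qed

lemma run10_4_11_gap_less:
  assumes ij: "i < j"
  shows "snd (run10 j (4, 11)) - fst (run10 j (4, 11))
    < fib (2 * (j - i) + 2) * (snd (run10 i (4, 11)) - fst (run10 i (4, 11)))"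
proof -
  define k where "k = j - 1 - i"
  define x where "x = fst (run10 i (4, 11))"
  define y where "y = snd (run10 i (4, 11))"
  have xy: "x < y" unfolding x_def y_def by (rule run10_fst_less_snd) simp
  have ratio: "3 * x < 2 * y" using run10_4_11_ratio[of i] by (simp add: x_def y_def)
  obtain j' where j': "j = Suc j'" using ij by (cases j) auto
  have "snd (run10 j (4, 11)) - fst (run10 j (4, 11)) = snd (run10 j' (4, 11))" using run10_Suc_diff j'
    by simp
  also have "run10 j' (4, 11) = run10 k (run10 i (4, 11))" using run10_add[of i k] ij j' by (simp add: k_def)
  also have "snd (run10 k (run10 i (4, 11))) = fib (2 * k) * x + fib (Suc (2 * k)) * y"
    using snd_run10[of k x y] by (simp add: x_def y_def)
  finally have u: "snd (run10 j (4, 11)) - fst (run10 j (4, 11)) = fib (2 * k) * x + fib (Suc (2 * k)) * y" .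
  have k: "2 * (j - i) + 2 = 2 * k + 4" using ij by (simp add: k_def)
  define P where "P = fib (2 * k)"
  define Q where "Q = fib (Suc (2 * k))"
  define d where "d = y - x"
  have yd: "y = x + d" using xy by (simp add: d_def)
  have "Q \<ge> 1" unfolding Q_def by (rule fib_ge_1) simp
  moreover have "x < 2 * d" using ratio yd by simp
  ultimately have "(P + Q) * x < (P + Q) * (2 * d)" by simp
  hence "P * x + Q * y < (2 * P + 3 * Q) * d" unfolding yd by (simp add: algebra_simps)
  moreover have "fib (2 * k + 4) = 2 * P + 3 * Q" using fib_shift_expand(3)[of "2 * k"]
    by (simp add: P_def Q_def)
  ultimately show ?thesis unfolding u k x_def[symmetric] y_def[symmetric] by (simp add: d_def P_def Q_def)
qed

lemma path_loss_famG_tail: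
  "path_loss (rep10 j @ [False, True, True]) (4, 11) = snd (run10 j (4, 11)) - fst (run10 j (4, 11))"
proof -
  have "fst (stern_step False (run10 j (4, 11))) \<le> snd (stern_step False (run10 j (4, 11)))"
    by (simp add: stern_step_def)
  thus ?thesis
    using path_loss_rep10_False[of "(4, 11)" "[True, True]" j] path_loss_11 by (simp del: path_loss.simps)
qed

lemma record_word_from_famG_tail: "record_word_from (rep10 j @ [False, True, True]) (4, 11)"
proof -
  have "fst (stern_step False (run10 j (4, 11))) < snd (stern_step False (run10 j (4, 11)))"
    using run10_fst_less_snd[of "(4, 11)" j] by (simp add: stern_step_def)
  thus ?thesis
    using record_word_from_rep10_False_iff[of "(4, 11)" "[True, True]" j] run10_4_11_gap_less
      path_loss_11 record_word_from_trailer[of _ "[True, True]"]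
    by (simp add: trailer_def del: path_loss.simps)
qed

lemma record_word_famG:
  assumes j: "2 \<le> j"
  shows "record_word ([True, False, False, True, False, False] @ rep10 j @ [False, True, True])"
proof -
  define n where "n = 2 * j + 9"
  define z where "z = rep10 j @ [False, True, True]"
  define P where "P = fib (2 * j)"
  define Q where "Q = fib (Suc (2 * j))"
  define u where "u = snd (run10 j (4, 11)) - fst (run10 j (4, 11))"
  have z: "z \<noteq> []" and n: "n = 4 + 2 * 1 + length z" by (simp_all add: z_def n_def)
  have lucas_3_5: "(lucas (2 * 1 + 1), lucas (2 * 1 + 3)) = (4, 11)" by (simp add: eval_nat_numeral)
  have u: "u + 3 * P = 7 * Q" using run10_4_11[of j] fib_Suc_mono[of "2 * j"]
    by (auto simp: u_def P_def Q_def)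
  have PQ: "Q < 2 * P"
  proof -
    have "fib (2 * j - 1) < fib (Suc (2 * j - 1))" using j by (intro fib_less_fib_Suc) auto
    moreover have "Q = P + fib (2 * j - 1)"
      using fib_diff_rec[of "Suc (2 * j)"] j by (simp add: P_def Q_def)
    ultimately show ?thesis using j by (simp add: P_def)
  qed
  have loss1: "loss100 n 1 = 3 * (P + 2 * Q)"
    using fib_shift_expand(2)[of "2 * j"]
      by (simp add: loss100_def n_def P_def Q_def eval_nat_numeral add.commute)
  have loss0: "loss100 n 0 = 2 * (3 * P + 5 * Q)"
    using fib_shift_expand(4)[of "2 * j"] by (simp add: loss100_def n_def P_def Q_def add.commute)
  have step: "loss100 n 1 + u < loss100 n 0" unfolding loss1 loss0 using u PQ by arith
  have "fib (n - 1) = fib (n - 2) + fib (n - 3)" "fib (n - 2) = fib (n - 3) + fib (n - 4)"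
    using fib_diff_rec[of "n - 1"] fib_diff_rec[of "n - 2"] by (simp_all add: n_def)
  moreover have "fib (n - 4) \<le> fib (n - 3)" by (rule fib_mono) simp
  ultimately have root: "fib (n - 3) + (loss100 n 1 + u) < fib (n - 1)"
    using step by (simp add: loss100_0)
  have "[True, False, False, True, False, False] @ rep10 j @ [False, True, True]
      = [True, False, False] @ rep10 1 @ False # z" by (simp add: z_def)
  moreover have "n = 3 + length (rep10 1 @ False # z)" by (simp add: n_def z_def)
  ultimately show ?thesis
    using record_word_100_iff[of "rep10 1 @ False # z" n] root step
      record_word_from_1_3_iff[OF z n] path_loss_rep10_False_1_3[OF z n]
      path_loss_famG_tail[of j] record_word_from_famG_tail[of j]
    unfolding lucas_3_5 by (simp add: z_def u_def del: path_loss.simps)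
qed

lemma fib_famG_tail_ineq:
  assumes m: "m \<ge> 3"
  shows "4 * fib m * fib (2*c) + 2 * fib (m - 1) * fib (2*c) + fib (m - 1) * fib (Suc (2*c)) \<le> 4 * fib m * fib (Suc (2*c))"
proof -
  define A where "A = fib m"
  define B where "B = fib (m - 1)"
  define P where "P = fib (2*c)"
  define Q where "Q = fib (Suc (2*c))"
  have AB: "3 * B \<le> 2 * A"
  proof -
    have "3 * fib (m - 1) \<le> 2 * fib (Suc (m - 1))" using m by (intro three_fib_le_two_fib_Suc) auto
    moreover have "Suc (m - 1) = m" using m by simp
    ultimately show ?thesis by (simp add: A_def B_def)
  qed
  show ?thesis
  proof (cases c)
    case 0
    hence "P = 0" "Q = 1" by (simp_all add: P_def Q_def)
    moreover have "fib (m - 1) \<le> fib m" using fib_mono[of "m-1" m] by simp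
    ultimately show ?thesis by (simp add: P_def Q_def)
  next
    case (Suc c')
    define R where "R = fib (Suc (2*c'))"
    define S where "S = fib (2*c')"
    have PQ: "P = R + S" "Q = P + R" by (simp_all add: P_def Q_def R_def S_def Suc)
    have SR: "3 * S \<le> 2 * R" unfolding S_def R_def by (intro three_fib_le_two_fib_Suc) auto
    have h1: "(3*B) * (2*R) \<le> (2*A) * (2*R)" by (rule mult_right_mono[OF AB]) simp
    have h2: "B * (3 * P + R) \<le> B * (6 * R)" using SR PQ by (intro mult_left_mono) auto
    have q1: "(3*B) * (2*R) = 6*(B*R)" "(2*A) * (2*R) = 4*(A*R)" "B * (6 * R) = 6*(B*R)"
      "B * (3 * P + R) = 3*(B*P) + B*R" "4 * A * R = 4*(A*R)" by (simp_all add: algebra_simps)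
    have "B * (3 * P + R) \<le> 4 * A * R" using h1 h2 q1 by linarith
    hence "4 * A * P + 2 * B * P + B * Q \<le> 4 * A * Q" using PQ by (simp add: algebra_simps)
    thus ?thesis by (simp add: A_def B_def P_def Q_def)
  qed
qed

lemma record_word_famG_prefix_less:
  assumes w: "record_word ([True, False, False, True, False, False] @ rep10 c @ False # y)" and y: "y \<noteq> []"
  shows "3 * fib (1 + 2 * c + length y) + path_loss (rep10 c @ False # y) (4, 11) < 2 * fib (3 + 2 * c + length y)"
proof -
  define n where "n = 7 + 2 * c + length y"
  have z: "rep10 c @ False # y \<noteq> []" by simp
  have n': "n = 4 + 2 * 1 + length (rep10 c @ False # y)" by (simp add: n_def)
  have "[True, False, False, True, False, False] @ rep10 c @ False # y
      = [True, False, False] @ rep10 1 @ False # rep10 c @ False # y" by simp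
  hence "record_word_from (rep10 1 @ False # rep10 c @ False # y) (1, 3)"
    using w record_word_100_iff[of "rep10 1 @ False # rep10 c @ False # y" n] by (simp add: n_def)
  hence "loss100 n 1 + path_loss (rep10 c @ False # y) (lucas 3, lucas 5) < loss100 n 0"
    using record_word_from_1_3_iff[OF z n'] by simp
  moreover have "(lucas 3, lucas 5) = (4, 11)" by (simp add: eval_nat_numeral)
  moreover have "loss100 n 1 = 3 * fib (1 + 2 * c + length y)"
    by (simp add: loss100_def n_def eval_nat_numeral)
  moreover have "loss100 n 0 = 2 * fib (3 + 2 * c + length y)" by (simp add: loss100_def n_def add.assoc)
  ultimately show ?thesis by simp
qed

lemma famG_tail_long_le:
  assumes m: "3 \<le> m" and u: "u + 3 * fib (2 * c) = 7 * fib (Suc (2 * c))"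
  shows "2 * fib (3 + 2 * c + m) \<le> 3 * fib (1 + 2 * c + m) + fib m * u"
proof -
  define P where "P = fib (2 * c)"
  define Q where "Q = fib (Suc (2 * c))"
  have fa: "fib (m - 1 + Suc (2 * c + 1)) = fib (Suc (2 * c + 1)) * fib (Suc (m - 1)) + fib (2 * c + 1) * fib (m - 1)"
    using fib_add[of "m - 1" "2 * c + 1"] by (simp only: add_Suc_right)
  have fb: "fib (m - 1 + Suc (2 * c + 3)) = fib (Suc (2 * c + 3)) * fib (Suc (m - 1)) + fib (2 * c + 3) * fib (m - 1)"
    using fib_add[of "m - 1" "2 * c + 3"] by (simp only: add_Suc_right)
  have sums: "m - 1 + Suc (2 * c + 1) = 1 + 2 * c + m" "m - 1 + Suc (2 * c + 3) = 3 + 2 * c + m" "Suc (m - 1) = m"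
    using m by auto
  have e1: "fib (1 + 2 * c + m) = (P + Q) * fib m + Q * fib (m - 1)"
    using fa sums fib_shift_expand[of "2 * c"] by (simp add: P_def Q_def eval_nat_numeral add_ac)
  have e2: "fib (3 + 2 * c + m) = (2 * P + 3 * Q) * fib m + (P + 2 * Q) * fib (m - 1)"
    using fb sums fib_shift_expand[of "2 * c"] by (simp add: P_def Q_def eval_nat_numeral add_ac)
  have k: "4 * fib m * P + 2 * fib (m - 1) * P + fib (m - 1) * Q \<le> 4 * fib m * Q"
    using fib_famG_tail_ineq[OF m, of c] by (simp add: P_def Q_def)
  have "fib m * (u + 3 * P) = fib m * (7 * Q)" using u by (simp add: P_def Q_def)
  hence "fib m * u + fib m * (3 * P) = fib m * (7 * Q)" by (simp only: distrib_left)
  thus ?thesis using e1 e2 k by (simp add: algebra_simps)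
qed

lemma famG_bound:
  assumes c: "record_word ([True, False, False, True, False, False] @ rep10 c @ False # y3)" and y: "y3 \<noteq> []"
    and l: "last y3 = True"
  shows "y3 = [True, True] \<and> 2 \<le> c"
proof (rule ccontr)
  assume nG: "\<not> (y3 = [True, True] \<and> 2 \<le> c)"
  define m where "m = length y3"
  define P where "P = fib (2*c)"
  define Q where "Q = fib (Suc (2*c))"
  define u where "u = snd (run10 c (4,11)) - fst (run10 c (4,11))"
  define s' where "s' = stern_step False (run10 c (4,11))"
  have sp: "3 * fib (1 + 2*c + m) + path_loss (rep10 c @ False # y3) (4,11) < 2 * fib (3 + 2*c + m)"
    using record_word_famG_prefix_less[OF c y] by (simp add: m_def)
  have tt: "path_loss (rep10 c @ False # y3) (4,11) = fib m * u + path_loss y3 s'"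
    using path_loss_rep10_False[of "(4,11)" y3 c] y by (simp add: m_def u_def s'_def)
  have PQ: "P \<le> Q" unfolding P_def Q_def by (rule fib_Suc_mono)
  have ue: "u + 3 * P = 7 * Q" "snd (run10 c (4,11)) = 4 * P + 11 * Q"
    using run10_4_11[of c] PQ by (auto simp: u_def P_def Q_def)
  have m1: "m \<ge> 1" using y by (cases y3) (auto simp: m_def)
  show False
  proof (cases "m \<le> 2")
    case True
    show False
    proof (cases "m = 1")
      case True
      have "fib (1 + 2*c + m) = P + Q" "fib (3 + 2*c + m) = 2 * P + 3 * Q"
        using True fib_shift_expand[of "2*c"]
        by (simp_all add: P_def Q_def add.commute)
      thus False using sp tt True ue PQ by simp
    next
      case False
      hence m2: "m = 2" using True m1 by simp
      then obtain b1 where y3: "y3 = [b1, True]" using l unfolding m_def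
        by (cases y3; cases "tl y3") auto
      have F13: "fib (1 + 2*c + m) = P + 2 * Q" "fib (3 + 2*c + m) = 3 * P + 5 * Q"
        using m2 fib_shift_expand[of "2*c"]
        by (simp_all add: P_def Q_def add.commute)
      have tt': "path_loss (rep10 c @ False # y3) (4,11) = u + path_loss y3 s'" using tt m2
        by (simp add: eval_nat_numeral)
      show False
      proof (cases b1)
        case True
        hence "c \<le> 1" using nG y3 by auto
        hence "Q \<ge> 2 * P" by (cases c) (auto simp: P_def Q_def eval_nat_numeral)
        thus False using sp tt' ue F13 by linarith
      next
        case False
        have "path_loss y3 s' \<ge> snd s' - fst s'"
          using False y3 by (cases s') (simp add: loss_False_Suc_Suc loss_True_1)
        moreover have "snd s' - fst s' = snd (run10 c (4,11))" by (simp add: s'_def stern_step_def)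
        ultimately show False using sp tt' ue F13 PQ by linarith
      qed
    qed
  next
    case False
    hence "3 \<le> m" by simp
    from famG_tail_long_le[OF this ue(1)[unfolded P_def Q_def]] show False using sp tt by linarith
  qed
qed

definition record_words :: "bool list set" where
  "record_words = {rep10 k @ [True] | k. True} \<union> {rep10 k @ [True, True] | k. True}
    \<union> {rep10 a @ False # rep10 b @ [True] | a b. 1 \<le> a \<and> a \<le> b + 1}
    \<union> {rep10 a @ False # rep10 b @ [True, True] | a b. 1 \<le> a}
    \<union> {[True, False, False] @ rep10 b @ False # rep10 c @ [True] | b c. b \<le> c + 1 \<and> \<not> (b = 0 \<and> c = 0)}
    \<union> {[True, False, False] @ rep10 b @ False # rep10 c @ [True, True] | b c. True}
    \<union> {[True, False, False, True, False, False] @ rep10 j @ [False, True, True] | j. 2 \<le> j}"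

lemma record_words_cases:
  assumes "w \<in> record_words"
  obtains (A) k where "w = rep10 k @ [True]"
    | (B) k where "w = rep10 k @ [True, True]"
    | (C) a b where "w = rep10 a @ False # rep10 b @ [True]" "1 \<le> a" "a \<le> b + 1"
    | (D) a b where "w = rep10 a @ False # rep10 b @ [True, True]" "1 \<le> a"
    | (E) b c where "w = [True, False, False] @ rep10 b @ False # rep10 c @ [True]" "b \<le> c + 1" "\<not> (b = 0 \<and> c = 0)"
    | (F) b c where "w = [True, False, False] @ rep10 b @ False # rep10 c @ [True, True]"
    | (G) j where "w = [True, False, False, True, False, False] @ rep10 j @ [False, True, True]" "2 \<le> j"
  using assms unfolding record_words_def by blast

lemma record_words_A: "rep10 k @ [True] \<in> record_words"
  and record_words_B: "rep10 k @ [True, True] \<in> record_words"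
  and record_words_C: "1 \<le> a \<Longrightarrow> a \<le> b + 1 \<Longrightarrow>
      rep10 a @ False # rep10 b @ [True] \<in> record_words"
  and record_words_D: "1 \<le> a \<Longrightarrow>
      rep10 a @ False # rep10 b @ [True, True] \<in> record_words"
  and record_words_E: "b \<le> c + 1 \<Longrightarrow> \<not> (b = 0 \<and> c = 0) \<Longrightarrow>
      [True, False, False] @ rep10 b @ False # rep10 c @ [True] \<in> record_words"
  and record_words_F: "[True, False, False] @ rep10 b @ False # rep10 c @ [True, True] \<in> record_words"
  and record_words_G: "2 \<le> j \<Longrightarrow>
      [True, False, False, True, False, False] @ rep10 j @ [False, True, True] \<in> record_words"
  unfolding record_words_def by blast+

lemma record_word_if_record_words:
  assumes "w \<in> record_words" shows "record_word w"
  using assms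
proof (cases rule: record_words_cases)
  case (A k) thus ?thesis using record_word_famAB[of "[True]" k] by (simp add: trailer_def)
next
  case (B k) thus ?thesis using record_word_famAB[of "[True, True]" k] by (simp add: trailer_def)
next
  case (C a b) thus ?thesis using record_word_famC_iff by simp
next
  case (D a b) thus ?thesis using record_word_famD by simp
next
  case (E b c) thus ?thesis using record_word_famE_iff by simp
next
  case (F b c) thus ?thesis using record_word_famF by simp
next
  case (G j) thus ?thesis using record_word_famG by simp
qed

lemma rep10_append_True_hd: "\<exists>s. rep10 k @ True # r = True # s"
  by (cases k) auto

lemma rep10_append_hd: "1 \<le> k \<Longrightarrow> \<exists>s. rep10 k @ r = True # s"
  by (cases k) auto

lemma record_words_hd:
  assumes "w \<in> record_words" shows "\<exists>s. w = True # s"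
  using assms
proof (cases rule: record_words_cases)
  case (A k) thus ?thesis using rep10_append_True_hd[of k "[]"] by simp
next
  case (B k) thus ?thesis using rep10_append_True_hd[of k "[True]"] by simp
next
  case (C a b) thus ?thesis using rep10_append_hd[of a "False # rep10 b @ [True]"] by simp
next
  case (D a b) thus ?thesis using rep10_append_hd[of a "False # rep10 b @ [True, True]"] by simp
qed auto

lemma rep10_prefix_decomp: "\<exists>k x. w = rep10 k @ x \<and> \<not> (\<exists>x'. x = True # False # x')"
proof (induction "length w" arbitrary: w rule: less_induct)
  case less
  show ?case
  proof (cases "\<exists>x'. w = True # False # x'")
    case True
    then obtain x' where w: "w = True # False # x'" by blast
    hence "length x' < length w" by simp
    then obtain k x where "x' = rep10 k @ x" "\<not> (\<exists>x''. x = True # False # x'')" using less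
      by blast
    thus ?thesis using w by (intro exI[of _ "Suc k"] exI[of _ x]) auto
  next
    case False
    thus ?thesis by (intro exI[of _ 0] exI[of _ w]) auto
  qed
qed

lemma record_word_from_split_rep10:
  assumes w: "record_word_from (p @ y) st"
  obtains (trailer) k E where "y = rep10 k @ E" "trailer E"
    | (rep10) k where "y = rep10 k"
    | (zero) k z where "y = rep10 k @ False # z"
proof -
  obtain k x where y: "y = rep10 k @ x" and no10: "\<not> (\<exists>x'. x = True # False # x')"
    using rep10_prefix_decomp by blast
  have "x = [] \<or> x = [True] \<or> (\<exists>r. x = True # True # r) \<or> (\<exists>z. x = False # z)"
  proof (cases x)
    case (Cons b x1) thus ?thesis using no10 by (cases b; cases x1) auto
  qed simp
  then consider "x = []" | "x = [True]" | r where "x = True # True # r" | z where "x = False # z"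
    by blast
  thus thesis
  proof cases
    case (3 r)
    have "record_word_from ((p @ rep10 k) @ True # True # r) st" using w y 3 by simp
    hence "r = []" by (rule record_word_from_no_inner_11)
    thus thesis using that(1)[of k "[True, True]"] y 3 by (simp add: trailer_def)
  qed (use y that in \<open>auto simp: trailer_def\<close>)
qed

lemma last_rep10: "1 \<le> k \<Longrightarrow> last (rep10 k) = False"
proof (induction k)
  case (Suc k) thus ?case by (cases k) auto
qed simp

lemma last_False_rep10: "last (False # rep10 b) = False"
  by (cases "b = 0") (auto simp: last_rep10)

lemma record_words_if_record_word_100:
  assumes w: "record_word ([True, False, False] @ rep10 b @ False # y)"
    and y: "y \<noteq> []" and last: "last y = True"
  shows "[True, False, False] @ rep10 b @ False # y \<in> record_words"
proof -
  have "record_word_from (([True, False, False] @ rep10 b @ [False]) @ y) (0, 1)" using w by simp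
  thus ?thesis
  proof (cases rule: record_word_from_split_rep10)
    case (trailer c E)
    thus ?thesis using w record_word_famE_iff[of b c] record_words_E record_words_F
      unfolding trailer_def by auto
  next
    case (rep10 c)
    hence "1 \<le> c" using y by (cases c) auto
    thus ?thesis using rep10 last last_rep10 by simp
  next
    case (zero c z)
    have z: "z \<noteq> []" using zero last by auto
    consider "b = 0" | "b = 1" | "2 \<le> b" by linarith
    thus ?thesis
    proof cases
      case 1 thus ?thesis using w zero z not_record_word_famE_b0[of c z] by simp
    next
      case 2
      hence "z = [True, True] \<and> 2 \<le> c" using w zero z last famG_bound[of c z] by simp
      thus ?thesis using zero 2 record_words_G[of c] by simp
    next
      case 3 thus ?thesis using w zero z not_record_word_famE_b2[of b c z] by simp
    qed
  qed
qed

lemma record_words_if_record_word_10: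
  assumes w: "record_word (rep10 a @ False # y)" and a: "1 \<le> a"
    and last: "last (rep10 a @ False # y) = True"
  shows "rep10 a @ False # y \<in> record_words"
proof -
  have "record_word_from ((rep10 a @ [False]) @ y) (0, 1)" using w by simp
  thus ?thesis
  proof (cases rule: record_word_from_split_rep10)
    case (trailer b E)
    thus ?thesis using w record_word_famC_iff[OF a, of b] record_words_C[OF a] record_words_D[OF a]
      unfolding trailer_def by auto
  next
    case (rep10 b)
    thus ?thesis using last last_False_rep10[of b] by simp
  next
    case (zero b z)
    have z: "z \<noteq> []" using zero last by auto
    show ?thesis
    proof (cases "a = 1")
      case True
      thus ?thesis using record_words_if_record_word_100[of b z] w zero z last by simp
    next
      case False
      thus ?thesis using w zero z a not_record_word_famC_a2[of a b z] by simp
    qed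
  qed
qed

lemma record_words_if_record_word:
  assumes w: "record_word w" and hd: "w = True # s" and last: "last w = True"
  shows "w \<in> record_words"
proof -
  have "record_word_from ([] @ w) (0, 1)" using w by simp
  thus ?thesis
  proof (cases rule: record_word_from_split_rep10)
    case (trailer k E)
    thus ?thesis using record_words_A record_words_B unfolding trailer_def by auto
  next
    case (rep10 k)
    hence "1 \<le> k" using hd by (cases k) auto
    thus ?thesis using rep10 last last_rep10 by simp
  next
    case (zero a z)
    have "1 \<le> a" using zero hd by (cases a) auto
    thus ?thesis using record_words_if_record_word_10[of a z] w zero last by simp
  qed
qed

theorem bin_rep_record_setters: "{bin_rep v | v. record_setter v} = record_words"
proof
  show "{bin_rep v | v. record_setter v} \<subseteq> record_words"
  proof
    fix w assume "w \<in> {bin_rep v | v. record_setter v}"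
    then obtain v where w: "w = bin_rep v" and r: "record_setter v" by blast
    have v1: "v \<ge> 1" using r by (simp add: record_setter_def)
    obtain s where s: "bin_rep v = True # s" using bin_rep_Cons_True[OF v1] by blast
    have "odd v" using record_setter_odd[OF r] .
    hence "bin_rep v = bin_rep (v div 2) @ [True]" using v1 by (subst bin_rep.simps) auto
    hence l: "last w = True" using w by simp
    have "record_word w" using record_setter_iff_record_word[OF v1] r w by simp
    thus "w \<in> record_words" using record_words_if_record_word[of w s] s w l by simp
  qed
next
  show "record_words \<subseteq> {bin_rep v | v. record_setter v}"
  proof
    fix w assume wf: "w \<in> record_words"
    obtain s where s: "w = True # s" using record_words_hd[OF wf] by blast
    define v where "v = bits_to_nat w"
    have b: "bin_rep v = w" using bin_rep_bits_to_nat[of s] s by (simp add: v_def)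
    have v1: "v \<ge> 1" using bits_to_nat_Cons_True_ge_1[of s] s by (simp add: v_def)
    have "record_setter v" using record_setter_iff_record_word[OF v1] b record_word_if_record_words[OF wf]
      by simp
    thus "w \<in> {bin_rep v | v. record_setter v}" using b by blast
  qed
qed

section \<open>Context-free grammars\<close>

fun sent_lang :: "('n \<Rightarrow> 't list set) \<Rightarrow> ('n + 't) list \<Rightarrow> 't list set" where
  "sent_lang I [] = {[]}"
| "sent_lang I (Inl A # \<alpha>) = {u @ v | u v. u \<in> I A \<and> v \<in> sent_lang I \<alpha>}"
| "sent_lang I (Inr t # \<alpha>) = (#) t ` sent_lang I \<alpha>"

lemma sent_lang_append: "sent_lang I (\<alpha> @ \<beta>) = {u @ v | u v. u \<in> sent_lang I \<alpha> \<and> v \<in> sent_lang I \<beta>}"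
proof (induction \<alpha>)
  case (Cons s \<alpha>)
  show ?case
  proof (cases s)
    case (Inl A)
    show ?thesis
    proof (intro set_eqI iffI)
      fix w assume "w \<in> sent_lang I ((s # \<alpha>) @ \<beta>)"
      then obtain u v1 v2 where "w = u @ v1 @ v2" "u \<in> I A" "v1 \<in> sent_lang I \<alpha>" "v2 \<in> sent_lang I \<beta>"
        using Cons Inl by auto
      thus "w \<in> {u @ v | u v. u \<in> sent_lang I (s # \<alpha>) \<and> v \<in> sent_lang I \<beta>}"
        using Inl by (metis (mono_tags, lifting) CollectI append.assoc sent_lang.simps(2))
    next
      fix w assume "w \<in> {u @ v | u v. u \<in> sent_lang I (s # \<alpha>) \<and> v \<in> sent_lang I \<beta>}"
      then obtain u1 u2 v where "w = u1 @ u2 @ v" "u1 \<in> I A" "u2 \<in> sent_lang I \<alpha>" "v \<in> sent_lang I \<beta>"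
        using Inl by auto
      thus "w \<in> sent_lang I ((s # \<alpha>) @ \<beta>)" using Cons Inl by auto
    qed
  next
    case (Inr t)
    have "sent_lang I ((s # \<alpha>) @ \<beta>) = (#) t ` {u @ v | u v. u \<in> sent_lang I \<alpha> \<and> v \<in> sent_lang I \<beta>}"
      using Cons Inr by simp
    also have "\<dots> = {u @ v | u v. u \<in> sent_lang I (s # \<alpha>) \<and> v \<in> sent_lang I \<beta>}"
      using Inr by (auto simp: image_iff; metis Cons_eq_appendI)
    finally show ?thesis .
  qed
qed simp

lemma sent_lang_InlI: "u \<in> I A \<Longrightarrow> v \<in> sent_lang I \<alpha> \<Longrightarrow>
    u @ v \<in> sent_lang I (Inl A # \<alpha>)"
  by auto

lemma sent_lang_InrI: "v \<in> sent_lang I \<alpha> \<Longrightarrow>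
    t # v \<in> sent_lang I (Inr t # \<alpha>)"
  by auto

lemma sent_lang_map_Inr [simp]: "sent_lang I (map Inr w) = {w}"
  by (induction w) auto

lemma cfg_step_context: "cfg_step P \<alpha> \<beta> \<Longrightarrow>
    cfg_step P (l @ \<alpha> @ r) (l @ \<beta> @ r)"
  unfolding cfg_step_def by (metis append.assoc)

lemma cfg_derives_context:
  "(cfg_step P)\<^sup>*\<^sup>* \<alpha> \<beta> \<Longrightarrow>
      (cfg_step P)\<^sup>*\<^sup>* (l @ \<alpha> @ r) (l @ \<beta> @ r)"
  by (induction rule: rtranclp_induct) (auto dest: cfg_step_context intro: rtranclp.rtrancl_into_rtrancl)

lemma cfg_derives_append:
  "(cfg_step P)\<^sup>*\<^sup>* \<alpha> \<alpha>' \<Longrightarrow>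
      (cfg_step P)\<^sup>*\<^sup>* \<beta> \<beta>' \<Longrightarrow> (cfg_step P)\<^sup>*\<^sup>* (\<alpha> @ \<beta>) (\<alpha>' @ \<beta>')"
  using cfg_derives_context[of P \<alpha> \<alpha>' "[]" \<beta>] cfg_derives_context[of P \<beta> \<beta>' \<alpha>' "[]"] by simp

lemma cfg_derives_sent_lang:
  "w \<in> sent_lang (cfg_lang P) \<alpha> \<Longrightarrow>
      (cfg_step P)\<^sup>*\<^sup>* \<alpha> (map Inr w)"
proof (induction \<alpha> arbitrary: w)
  case (Cons s \<alpha>)
  show ?case
  proof (cases s)
    case (Inl A)
    then obtain u v where "w = u @ v" "u \<in> cfg_lang P A" "v \<in> sent_lang (cfg_lang P) \<alpha>"
      using Cons.prems by auto
    moreover have "(cfg_step P)\<^sup>*\<^sup>* \<alpha> (map Inr v)"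
      using Cons.IH \<open>v \<in> sent_lang (cfg_lang P) \<alpha>\<close> .
    ultimately show ?thesis
      using Inl cfg_derives_append[of P "[Inl A]" "map Inr u" \<alpha> "map Inr v"]
        by (simp add: cfg_lang_def)
  next
    case (Inr t)
    thus ?thesis using Cons cfg_derives_append[of P "[Inr t]" "[Inr t]" \<alpha>] by fastforce
  qed
qed simp

lemma cfg_lang_closed: "(A, \<alpha>) \<in> P \<Longrightarrow>
    sent_lang (cfg_lang P) \<alpha> \<subseteq> cfg_lang P A"
proof
  fix w assume "(A, \<alpha>) \<in> P" "w \<in> sent_lang (cfg_lang P) \<alpha>"
  hence "cfg_step P [Inl A] \<alpha>" "(cfg_step P)\<^sup>*\<^sup>* \<alpha> (map Inr w)"
    by (auto simp: cfg_step_def intro!: exI[of _ "[]"] cfg_derives_sent_lang)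
  thus "w \<in> cfg_lang P A" unfolding cfg_lang_def by auto
qed

lemma cfg_lang_least:
  assumes closed: "\<And>A \<alpha>. (A, \<alpha>) \<in> P \<Longrightarrow>
      sent_lang I \<alpha> \<subseteq> I A"
  shows "cfg_lang P S \<subseteq> I S"
proof
  have "sent_lang I \<beta> \<subseteq> sent_lang I \<alpha>" if "(cfg_step P)\<^sup>*\<^sup>* \<alpha> \<beta>" for \<alpha> \<beta>
    using that
  proof (induction rule: rtranclp_induct)
    case (step \<beta> \<gamma>)
    then obtain l A r \<delta> where "\<beta> = l @ [Inl A] @ r" "(A, \<delta>) \<in> P" "\<gamma> = l @ \<delta> @ r"
      unfolding cfg_step_def by blast
    thus ?case using step.IH closed[of A \<delta>] by (auto simp: sent_lang_append) blast
  qed simp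
  thus "w \<in> I S" if "w \<in> cfg_lang P S" for w
    using that unfolding cfg_lang_def by fastforce
qed

section \<open>A grammar for the record words\<close>

text \<open>Nonterminal 0 is the start symbol; 1 generates the words (10)^k and
  2 generates the words (10)^(a+1) 0 (10)^a.\<close>

definition record_grammar :: "(nat, bool) prod set" where
  "record_grammar = {(1, []), (1, [Inr True, Inr False, Inl 1]),
     (2, [Inr True, Inr False, Inr False]), (2, [Inr True, Inr False, Inl 2, Inr True, Inr False]),
     (0, [Inl 1, Inr True]),
     (0, [Inl 1, Inr True, Inr True]),
     (0, [Inl 2, Inl 1, Inr True]),
     (0, [Inr True, Inr False, Inl 1, Inr False, Inl 1, Inr True, Inr True]),
     (0, [Inr True, Inr False, Inr False, Inl 2, Inl 1, Inr True]),
     (0, [Inr True, Inr False, Inr False, Inr False, Inr True, Inr False, Inl 1, Inr True]),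
     (0, [Inr True, Inr False, Inr False, Inl 1, Inr False, Inl 1, Inr True, Inr True]),
     (0, [Inr True, Inr False, Inr False, Inr True, Inr False, Inr False, Inr True, Inr False, Inr True, Inr False,
          Inl 1, Inr False, Inr True, Inr True])}"

definition record_nonterminal_lang :: "nat \<Rightarrow> bool list set" where
  "record_nonterminal_lang A =
    (if A = 0 then record_words else if A = 1 then range rep10
     else if A = 2 then {rep10 (Suc a) @ False # rep10 a | a. True} else {})"

lemma record_nonterminal_lang_2: "record_nonterminal_lang 2 = {rep10 (Suc a) @ False # rep10 a | a. True}"
  by (simp add: record_nonterminal_lang_def)

lemma record_grammar_sound_X0: "sent_lang record_nonterminal_lang [] \<subseteq> record_nonterminal_lang 1"
  by (auto simp: record_nonterminal_lang_def intro: range_eqI[of _ _ 0])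

lemma record_grammar_sound_X1: "sent_lang record_nonterminal_lang [Inr True, Inr False, Inl 1] \<subseteq> record_nonterminal_lang 1"
proof
  fix w assume "w \<in> sent_lang record_nonterminal_lang [Inr True, Inr False, Inl 1]"
  then obtain k where "w = True # False # rep10 k" by (auto simp: record_nonterminal_lang_def)
  thus "w \<in> record_nonterminal_lang 1"
    by (auto simp: record_nonterminal_lang_def intro: range_eqI[of _ _ "Suc k"])
qed

lemma record_grammar_sound_W0: "sent_lang record_nonterminal_lang [Inr True, Inr False, Inr False] \<subseteq> record_nonterminal_lang 2"
proof
  fix w assume "w \<in> sent_lang record_nonterminal_lang [Inr True, Inr False, Inr False]"
  hence "w = rep10 (Suc 0) @ False # rep10 0" by simp
  moreover have "rep10 (Suc 0) @ False # rep10 0 \<in> record_nonterminal_lang 2" unfolding record_nonterminal_lang_2 by blast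
  ultimately show "w \<in> record_nonterminal_lang 2" by simp
qed

lemma record_grammar_sound_W1: "sent_lang record_nonterminal_lang [Inr True, Inr False, Inl 2, Inr True, Inr False] \<subseteq> record_nonterminal_lang 2"
proof
  fix w assume "w \<in> sent_lang record_nonterminal_lang [Inr True, Inr False, Inl 2, Inr True, Inr False]"
  then obtain a where "w = True # False # (rep10 (Suc a) @ False # rep10 a) @ [True, False]"
    by (auto simp: record_nonterminal_lang_def)
  hence "w = rep10 (Suc (Suc a)) @ False # rep10 (Suc a)" by (simp add: rep10_append_10)
  moreover have "rep10 (Suc (Suc a)) @ False # rep10 (Suc a) \<in> record_nonterminal_lang 2" unfolding record_nonterminal_lang_2 by blast
  ultimately show "w \<in> record_nonterminal_lang 2" by (simp del: rep10_Suc)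
qed

lemma record_grammar_sound_SA: "sent_lang record_nonterminal_lang [Inl 1, Inr True] \<subseteq> record_nonterminal_lang 0"
  by (auto simp: record_nonterminal_lang_def record_words_A)

lemma record_grammar_sound_SB: "sent_lang record_nonterminal_lang [Inl 1, Inr True, Inr True] \<subseteq> record_nonterminal_lang 0"
  by (auto simp: record_nonterminal_lang_def record_words_B)

lemma record_grammar_sound_SC: "sent_lang record_nonterminal_lang [Inl 2, Inl 1, Inr True] \<subseteq> record_nonterminal_lang 0"
proof
  fix w assume "w \<in> sent_lang record_nonterminal_lang [Inl 2, Inl 1, Inr True]"
  then obtain a e where "w = (rep10 (Suc a) @ False # rep10 a) @ rep10 e @ [True]"
    by (auto simp: record_nonterminal_lang_def)
  hence "w = rep10 (Suc a) @ False # rep10 (a + e) @ [True]" by (simp add: rep10_add)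
  thus "w \<in> record_nonterminal_lang 0" using record_words_C[of "Suc a" "a + e"]
    by (simp add: record_nonterminal_lang_def)
qed

lemma record_grammar_sound_SD: "sent_lang record_nonterminal_lang [Inr True, Inr False, Inl 1, Inr False, Inl 1, Inr True, Inr True] \<subseteq> record_nonterminal_lang 0"
proof
  fix w assume "w \<in> sent_lang record_nonterminal_lang [Inr True, Inr False, Inl 1, Inr False, Inl 1, Inr True, Inr True]"
  then obtain k b where "w = True # False # rep10 k @ False # rep10 b @ [True, True]"
    by (auto simp: record_nonterminal_lang_def)
  hence "w = rep10 (Suc k) @ False # rep10 b @ [True, True]" by simp
  thus "w \<in> record_nonterminal_lang 0" using record_words_D[of "Suc k" b]
    by (simp add: record_nonterminal_lang_def)
qed

lemma record_grammar_sound_SE1: "sent_lang record_nonterminal_lang [Inr True, Inr False, Inr False, Inl 2, Inl 1, Inr True] \<subseteq> record_nonterminal_lang 0"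
proof
  fix w assume "w \<in> sent_lang record_nonterminal_lang [Inr True, Inr False, Inr False, Inl 2, Inl 1, Inr True]"
  then obtain a e where "w = [True, False, False] @ (rep10 (Suc a) @ False # rep10 a) @ rep10 e @ [True]"
    by (auto simp: record_nonterminal_lang_def)
  hence "w = [True, False, False] @ rep10 (Suc a) @ False # rep10 (a + e) @ [True]" by (simp add: rep10_add)
  thus "w \<in> record_nonterminal_lang 0" using record_words_E[of "Suc a" "a + e"]
    by (simp add: record_nonterminal_lang_def)
qed

lemma record_grammar_sound_SE0: "sent_lang record_nonterminal_lang [Inr True, Inr False, Inr False, Inr False, Inr True, Inr False, Inl 1, Inr True] \<subseteq> record_nonterminal_lang 0"
proof
  fix w assume "w \<in> sent_lang record_nonterminal_lang [Inr True, Inr False, Inr False, Inr False, Inr True, Inr False, Inl 1, Inr True]"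
  then obtain k where "w = [True, False, False, False, True, False] @ rep10 k @ [True]"
    by (auto simp: record_nonterminal_lang_def)
  hence "w = [True, False, False] @ rep10 0 @ False # rep10 (Suc k) @ [True]" by simp
  thus "w \<in> record_nonterminal_lang 0" using record_words_E[of 0 "Suc k"]
    by (simp add: record_nonterminal_lang_def)
qed

lemma record_grammar_sound_SF: "sent_lang record_nonterminal_lang [Inr True, Inr False, Inr False, Inl 1, Inr False, Inl 1, Inr True, Inr True] \<subseteq> record_nonterminal_lang 0"
proof
  fix w assume "w \<in> sent_lang record_nonterminal_lang [Inr True, Inr False, Inr False, Inl 1, Inr False, Inl 1, Inr True, Inr True]"
  then obtain b c where "w = [True, False, False] @ rep10 b @ False # rep10 c @ [True, True]"
    by (auto simp: record_nonterminal_lang_def)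
  thus "w \<in> record_nonterminal_lang 0" using record_words_F[of b c]
    by (simp add: record_nonterminal_lang_def)
qed

lemma record_grammar_sound_SG: "sent_lang record_nonterminal_lang [Inr True, Inr False, Inr False, Inr True, Inr False, Inr False, Inr True, Inr False, Inr True, Inr False,
          Inl 1, Inr False, Inr True, Inr True] \<subseteq> record_nonterminal_lang 0"
proof
  fix w assume "w \<in> sent_lang record_nonterminal_lang [Inr True, Inr False, Inr False, Inr True, Inr False, Inr False, Inr True, Inr False, Inr True, Inr False,
          Inl 1, Inr False, Inr True, Inr True]"
  then obtain k where "w = [True, False, False, True, False, False, True, False, True, False] @ rep10 k @ [False, True, True]"
    by (auto simp: record_nonterminal_lang_def)
  hence "w = [True, False, False, True, False, False] @ rep10 (Suc (Suc k)) @ [False, True, True]" by simp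
  thus "w \<in> record_nonterminal_lang 0" using record_words_G[of "Suc (Suc k)"]
    by (simp add: record_nonterminal_lang_def)
qed

lemma record_grammar_closed:
  "(A, \<alpha>) \<in> record_grammar \<Longrightarrow>
      sent_lang record_nonterminal_lang \<alpha> \<subseteq> record_nonterminal_lang A"
  unfolding record_grammar_def
  by (elim insertE emptyE, simp_all only: prod.inject)
    (rule record_grammar_sound_X0 record_grammar_sound_X1 record_grammar_sound_W0 record_grammar_sound_W1
      record_grammar_sound_SA record_grammar_sound_SB record_grammar_sound_SC record_grammar_sound_SD
      record_grammar_sound_SE1 record_grammar_sound_SE0 record_grammar_sound_SF record_grammar_sound_SG)+

lemma rep10_in_record_grammar: "rep10 k \<in> cfg_lang record_grammar 1"
proof (induction k)
  case 0
  have "(1, []) \<in> record_grammar" by (simp add: record_grammar_def)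
  from subsetD[OF cfg_lang_closed[OF this]] show ?case by simp
next
  case (Suc k)
  have "(1, [Inr True, Inr False, Inl 1]) \<in> record_grammar" by (simp add: record_grammar_def)
  moreover have "True # False # rep10 k @ [] \<in> sent_lang (cfg_lang record_grammar) [Inr True, Inr False, Inl 1]"
    using Suc by (intro sent_lang_InrI sent_lang_InlI) auto
  ultimately have "True # False # rep10 k @ [] \<in> cfg_lang record_grammar 1"
    by (rule subsetD[OF cfg_lang_closed])
  thus ?case by simp
qed

lemma rep10_Suc_False_rep10_in_record_grammar:
  "rep10 (Suc a) @ False # rep10 a \<in> cfg_lang record_grammar 2"
proof (induction a)
  case 0
  have "(2, [Inr True, Inr False, Inr False]) \<in> record_grammar" by (simp add: record_grammar_def)
  from subsetD[OF cfg_lang_closed[OF this]] show ?case by simp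
next
  case (Suc a)
  have "(2, [Inr True, Inr False, Inl 2, Inr True, Inr False]) \<in> record_grammar"
    by (simp add: record_grammar_def)
  moreover have "True # False # (rep10 (Suc a) @ False # rep10 a) @ [True, False]
      \<in> sent_lang (cfg_lang record_grammar) [Inr True, Inr False, Inl 2, Inr True, Inr False]"
    using Suc by (intro sent_lang_InrI sent_lang_InlI) auto
  ultimately have "True # False # (rep10 (Suc a) @ False # rep10 a) @ [True, False] \<in> cfg_lang record_grammar 2"
    by (rule subsetD[OF cfg_lang_closed])
  thus ?case by (simp add: rep10_append_10)
qed

lemma record_grammar_prodI:
  assumes "w \<in> sent_lang (cfg_lang record_grammar) \<alpha>" "(0, \<alpha>) \<in> record_grammar"
  shows "w \<in> cfg_lang record_grammar 0"
  using cfg_lang_closed[OF assms(2)] assms(1) by (rule subsetD)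

lemmas record_grammar_intros = sent_lang_InlI sent_lang_InrI rep10_in_record_grammar
  rep10_Suc_False_rep10_in_record_grammar

lemma record_grammar_A: "rep10 k @ [True] \<in> cfg_lang record_grammar 0"
  by (rule record_grammar_prodI[of _ "[Inl 1, Inr True]"])
    (intro record_grammar_intros, simp, simp add: record_grammar_def)

lemma record_grammar_B: "rep10 k @ [True, True] \<in> cfg_lang record_grammar 0"
  by (rule record_grammar_prodI[of _ "[Inl 1, Inr True, Inr True]"])
    (intro record_grammar_intros, simp, simp add: record_grammar_def)

lemma record_grammar_C: "(rep10 (Suc a) @ False # rep10 a) @ rep10 e @ [True] \<in> cfg_lang record_grammar 0"
  by (rule record_grammar_prodI[of _ "[Inl 2, Inl 1, Inr True]"])
    (intro record_grammar_intros, simp, simp add: record_grammar_def)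

lemma record_grammar_D: "True # False # rep10 k @ False # rep10 b @ [True, True] \<in> cfg_lang record_grammar 0"
  by (rule record_grammar_prodI[of _ "[Inr True, Inr False, Inl 1, Inr False, Inl 1, Inr True, Inr True]"])
    (intro record_grammar_intros, simp, simp add: record_grammar_def)

lemma record_grammar_E0: "True # False # False # False # True # False # rep10 k @ [True] \<in> cfg_lang record_grammar 0"
  by (rule record_grammar_prodI[of _ "[Inr True, Inr False, Inr False, Inr False, Inr True, Inr False, Inl 1, Inr True]"])
    (intro record_grammar_intros, simp, simp add: record_grammar_def)

lemma record_grammar_E: "True # False # False # (rep10 (Suc a) @ False # rep10 a) @ rep10 e @ [True] \<in> cfg_lang record_grammar 0"
  by (rule record_grammar_prodI[of _ "[Inr True, Inr False, Inr False, Inl 2, Inl 1, Inr True]"])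
    (intro record_grammar_intros, simp, simp add: record_grammar_def)

lemma record_grammar_F: "True # False # False # rep10 b @ False # rep10 c @ [True, True] \<in> cfg_lang record_grammar 0"
  by (rule record_grammar_prodI[of _ "[Inr True, Inr False, Inr False, Inl 1, Inr False, Inl 1, Inr True, Inr True]"])
    (intro record_grammar_intros, simp, simp add: record_grammar_def)

lemma record_grammar_G:
  "True # False # False # True # False # False # True # False # True # False # rep10 k @ [False, True, True]
    \<in> cfg_lang record_grammar 0"
  by (rule record_grammar_prodI[of _ "[Inr True, Inr False, Inr False, Inr True, Inr False, Inr False, Inr True,
      Inr False, Inr True, Inr False, Inl 1, Inr False, Inr True, Inr True]"])
    (intro record_grammar_intros, simp, simp add: record_grammar_def)

lemma record_grammar_complete: "record_words \<subseteq> cfg_lang record_grammar 0"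
proof
  fix w assume "w \<in> record_words"
  thus "w \<in> cfg_lang record_grammar 0"
  proof (cases rule: record_words_cases)
    case (A k) thus ?thesis using record_grammar_A by simp
  next
    case (B k) thus ?thesis using record_grammar_B by simp
  next
    case (C a b)
    then obtain a' where a': "a = Suc a'" by (cases a) auto
    hence "b = a' + (b - a')" using C by simp
    hence "w = (rep10 (Suc a') @ False # rep10 a') @ rep10 (b - a') @ [True]"
      using C a' by (metis append.assoc append_Cons rep10_add)
    thus ?thesis using record_grammar_C by simp
  next
    case (D a b)
    then obtain k where "a = Suc k" by (cases a) auto
    thus ?thesis using D record_grammar_D by simp
  next
    case (E b c)
    show ?thesis
    proof (cases b)
      case 0
      then obtain k where "c = Suc k" using E by (cases c) auto
      thus ?thesis using E 0 record_grammar_E0 by simp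
    next
      case (Suc a')
      hence "c = a' + (c - a')" using E by simp
      hence "w = True # False # False # (rep10 (Suc a') @ False # rep10 a') @ rep10 (c - a') @ [True]"
        using E Suc by (metis append.assoc append_Cons append_Nil rep10_add)
      thus ?thesis using record_grammar_E by simp
    qed
  next
    case (F b c) thus ?thesis using record_grammar_F by simp
  next
    case (G j)
    hence "j = Suc (Suc (j - 2))" by simp
    hence "rep10 j = True # False # True # False # rep10 (j - 2)" by (metis rep10_Suc)
    thus ?thesis using G record_grammar_G by simp
  qed
qed

lemma cfg_lang_record_grammar: "cfg_lang record_grammar 0 = record_words"
proof (rule equalityI)
  have "cfg_lang record_grammar 0 \<subseteq> record_nonterminal_lang 0"
    by (rule cfg_lang_least, rule record_grammar_closed)
  thus "cfg_lang record_grammar 0 \<subseteq> record_words" by (simp add: record_nonterminal_lang_def)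
qed (rule record_grammar_complete)

lemma finite_record_grammar: "finite record_grammar"
  by (simp add: record_grammar_def)

theorem mainTheorem20:
  shows "context_free {bin_rep v | v. record_setter v}"
  unfolding context_free_def bin_rep_record_setters
  using finite_record_grammar cfg_lang_record_grammar by blast

end
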